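(* Let $G$ be a simple, undirected, connected bipartite graph on $N$ vertices with edge set $E$ and degrees $d_j$. Let $\lambda_2$ be the second largest eigenvalue of the transition matrix $P$ of the simple random walk on $G$, and set $$k=\left\lfloor\frac{\lambda_2(N-1)+1}{\lambda_2+1}\right\rfloor,\qquad \theta=\lambda_2(N-k-2)-k+2.$$ Then $$R^+(G)\le N\left(\frac12+\frac{N-k-3}{1-\lambda_2}+\frac{k}{2}+\frac{1}{\theta}\right)+\frac{1}{1-\lambda_2}\left(2|E|\sum_{j}\frac{1}{d_j}-N\right).$$
   Context: $P=(p(v,w))$ is the $N\times N$ matrix with $p(v,w)=1/d_v$ if $v,w$ are adjacent and $0$ otherwise; its eigenvalues are real, $1=\lambda_1>\lambda_2\ge\cdots\ge\lambda_N\ge-1$. For vertices $i,j$, $R_{ij}$ denotes the effective resistance between $i$ and $j$ when every edge is a unit resistor. The additive degree-Kirchhoff index is $R^+(G)=\sum_{i<j}(d_i+d_j)R_{ij}$. *)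

theory Defs
  imports "Jordan_Normal_Form.Char_Poly" "HOL-Library.Multiset"
begin

definition simple_graph :: "nat \<Rightarrow> (nat \<Rightarrow> nat \<Rightarrow> bool) \<Rightarrow> bool" where
  "simple_graph N E \<longleftrightarrow>
     (\<forall>u v. E u v \<longrightarrow> u < N \<and> v < N) \<and>
     (\<forall>u v. E u v \<longrightarrow> E v u) \<and> (\<forall>u. \<not> E u u)"

definition connected_graph :: "nat \<Rightarrow> (nat \<Rightarrow> nat \<Rightarrow> bool) \<Rightarrow> bool" where
  "connected_graph N E \<longleftrightarrow> (\<forall>u<N. \<forall>v<N. E\<^sup>*\<^sup>* u v)"

definition bipartite_graph :: "nat \<Rightarrow> (nat \<Rightarrow> nat \<Rightarrow> bool) \<Rightarrow> bool" where
  "bipartite_graph N E \<longleftrightarrow>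
     (\<exists>S. S \<subseteq> {0..<N} \<and> (\<forall>u v. E u v \<longrightarrow> (u \<in> S \<longleftrightarrow> v \<notin> S)))"

definition deg :: "nat \<Rightarrow> (nat \<Rightarrow> nat \<Rightarrow> bool) \<Rightarrow> nat \<Rightarrow> nat" where
  "deg N E v = card {w \<in> {0..<N}. E v w}"

definition num_edges :: "nat \<Rightarrow> (nat \<Rightarrow> nat \<Rightarrow> bool) \<Rightarrow> nat" where
  "num_edges N E = card {(u, v). u < v \<and> v < N \<and> E u v}"

definition trans_mat :: "nat \<Rightarrow> (nat \<Rightarrow> nat \<Rightarrow> bool) \<Rightarrow> real mat" where
  "trans_mat N E = mat N N (\<lambda>(v, w). if E v w then 1 / real (deg N E v) else 0)"

text \<open>Eigenvalues of P with multiplicity (roots of the characteristic polynomial),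
  listed in non-increasing order: lambda_1 \<ge> lambda_2 \<ge> ... \<close>
definition trans_eigenvalues :: "nat \<Rightarrow> (nat \<Rightarrow> nat \<Rightarrow> bool) \<Rightarrow> real list" where
  "trans_eigenvalues N E = rev (sorted_list_of_multiset (proots (char_poly (trans_mat N E))))"

definition lambda2 :: "nat \<Rightarrow> (nat \<Rightarrow> nat \<Rightarrow> bool) \<Rightarrow> real" where
  "lambda2 N E = trans_eigenvalues N E ! 1"

definition laplacian_apply :: "nat \<Rightarrow> (nat \<Rightarrow> nat \<Rightarrow> bool) \<Rightarrow> (nat \<Rightarrow> real) \<Rightarrow> nat \<Rightarrow> real" where
  "laplacian_apply N E x v = real (deg N E v) * x v - (\<Sum>w\<in>{w \<in> {0..<N}. E v w}. x w)"

text \<open>Effective resistance between i and j (unit resistors): the potential difference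
  x_i - x_j for a potential x with L x = e_i - e_j (unit current in at i, out at j).\<close>
definition eff_resistance :: "nat \<Rightarrow> (nat \<Rightarrow> nat \<Rightarrow> bool) \<Rightarrow> nat \<Rightarrow> nat \<Rightarrow> real" where
  "eff_resistance N E i j =
     (THE r. \<exists>x. (\<forall>v<N. laplacian_apply N E x v =
                      (if v = i then 1 else 0) - (if v = j then 1 else 0)) \<and> r = x i - x j)"

definition add_deg_kirchhoff :: "nat \<Rightarrow> (nat \<Rightarrow> nat \<Rightarrow> bool) \<Rightarrow> real" where
  "add_deg_kirchhoff N E =
     (\<Sum>j<N. \<Sum>i<j. real (deg N E i + deg N E j) * eff_resistance N E i j)"

end

theory Submission
  imports Defs "HOL-Analysis.Analysis"
begin

text \<open>
  Write P = D^-1 A. It is similar to the symmetric matrix S = D^-1/2 A D^-1/2, so it has an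
  orthonormal eigenbasis u_1, ..., u_N of S with eigenvalues lam_k, and the vectors
  u_k / sqrt d are eigenvectors of P. Solving L x = e_i - e_j in this basis gives
  R_ij = sum over lam_k \<noteq> 1 of (u_k(i)/sqrt d_i - u_k(j)/sqrt d_j)^2 / (1 - lam_k), and
  summing with the weights d_i + d_j yields
    R^+(G) = sum over lam_k \<noteq> 1 of (N + 2|E| sum_j u_k(j)^2/d_j) / (1 - lam_k).
  Since G is connected and bipartite, 1 and -1 are simple eigenvalues with
  u_k(j)^2 = d_j / 2|E|; the eigenvalue -1 contributes exactly N. For the remaining N - 2
  eigenvalues, 1/(1 - lam_k) \<le> 1/(1 - lambda_2) handles the second part of the numerator,
  and the completeness relation sum_k u_k(j)^2 = 1 evaluates the resulting sum. The first part
  is bounded by maximizing the convex function sum 1/(1 - y_k) over y_k in [-1, lambda_2]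
  with sum y_k = 0 (the trace of S vanishes): the maximum is attained with all but one
  y_k at an endpoint, which produces k and theta.
\<close>

text \<open>Vectors of length n are functions on nat of which only the entries below n matter.\<close>

definition dot :: "nat \<Rightarrow> (nat \<Rightarrow> real) \<Rightarrow> (nat \<Rightarrow> real) \<Rightarrow> real" where
  "dot n f g = (\<Sum>i<n. f i * g i)"

definition matvec :: "nat \<Rightarrow> (nat \<Rightarrow> nat \<Rightarrow> real) \<Rightarrow> (nat \<Rightarrow> real) \<Rightarrow> nat \<Rightarrow> real" where
  "matvec n A f i = (\<Sum>j<n. A i j * f j)"

definition symmetric_matrix :: "nat \<Rightarrow> (nat \<Rightarrow> nat \<Rightarrow> real) \<Rightarrow> bool" where
  "symmetric_matrix n A \<longleftrightarrow> (\<forall>i<n. \<forall>j<n. A i j = A j i)"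

definition orthonormal_family :: "nat \<Rightarrow> nat \<Rightarrow> (nat \<Rightarrow> nat \<Rightarrow> real) \<Rightarrow> bool" where
  "orthonormal_family n r u \<longleftrightarrow> (\<forall>a<r. \<forall>b<r. dot n (u a) (u b) = (if a = b then 1 else 0))"

lemma dot_commute: "dot n f g = dot n g f"
  unfolding dot_def by (simp add: mult.commute)

lemma dot_self_nonneg: "dot n f f \<ge> 0"
  unfolding dot_def by (auto intro: sum_nonneg)

lemma dot_self_eq_0_iff: "dot n f f = 0 \<longleftrightarrow> (\<forall>i<n. f i = 0)"
  unfolding dot_def by (auto simp: sum_nonneg_eq_0_iff)

lemma dot_cong:
  "(\<And>i. i < n \<Longrightarrow> f i = f' i) \<Longrightarrow> (\<And>i. i < n \<Longrightarrow> g i = g' i) \<Longrightarrow> dot n f g = dot n f' g'"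
  unfolding dot_def by (intro sum.cong) auto

lemma dot_scale_left: "dot n (\<lambda>i. a * f i) h = a * dot n f h"
  unfolding dot_def by (simp add: algebra_simps sum_distrib_left)

lemma dot_scale_right: "dot n h (\<lambda>i. a * f i) = a * dot n h f"
  unfolding dot_def by (simp add: algebra_simps sum_distrib_left)

lemma dot_diff_right: "dot n h (\<lambda>i. f i - g i) = dot n h f - dot n h g"
  unfolding dot_def by (simp add: algebra_simps sum_subtractf)

lemma dot_add_left: "dot n (\<lambda>i. f i + g i) h = dot n f h + dot n g h"
  unfolding dot_def by (simp add: algebra_simps sum.distrib)

lemma dot_add_right: "dot n h (\<lambda>i. f i + g i) = dot n h f + dot n h g"
  unfolding dot_def by (simp add: algebra_simps sum.distrib)

lemma dot_restrict_left: "dot n (restrict f {..<n}) g = dot n f g"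
  unfolding dot_def by (intro sum.cong) auto

lemma dot_restrict_right: "dot n g (restrict f {..<n}) = dot n g f"
  unfolding dot_def by (intro sum.cong) auto

lemma square_le_dot_self: "i < n \<Longrightarrow> (f i)\<^sup>2 \<le> dot n f f"
  unfolding dot_def power2_eq_square by (rule member_le_sum) auto

lemma matvec_restrict: "matvec n A (restrict f {..<n}) = matvec n A f"
  unfolding matvec_def by (intro ext sum.cong) auto

lemma matvec_add_scaled: "matvec n A (\<lambda>i. f i + t * z i) = (\<lambda>i. matvec n A f i + t * matvec n A z i)"
  unfolding matvec_def by (simp add: algebra_simps sum.distrib sum_distrib_left)

lemma matvec_scale: "matvec n A (\<lambda>i. s * f i) = (\<lambda>i. s * matvec n A f i)"
  unfolding matvec_def by (simp add: algebra_simps sum_distrib_left)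

lemma dot_matvec_symmetric:
  assumes "symmetric_matrix n A"
  shows "dot n f (matvec n A g) = dot n (matvec n A f) g"
proof -
  have "dot n f (matvec n A g) = (\<Sum>i<n. \<Sum>j<n. f i * A i j * g j)"
    by (simp add: dot_def matvec_def sum_distrib_left mult.assoc)
  also have "\<dots> = (\<Sum>j<n. \<Sum>i<n. f i * A i j * g j)" by (rule sum.swap)
  also have "\<dots> = (\<Sum>j<n. \<Sum>i<n. A j i * f i * g j)"
    using assms unfolding symmetric_matrix_def by (intro sum.cong refl) (simp add: mult.commute)
  also have "\<dots> = dot n (matvec n A f) g" by (simp add: dot_def matvec_def sum_distrib_right)
  finally show ?thesis .
qed

lemma orthonormal_family_dot_expansion:
  assumes "orthonormal_family n r u" "a < r"
  shows "(\<Sum>b<r. c b * dot n (u a) (u b)) = c a"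
proof -
  have "(\<Sum>b<r. c b * dot n (u a) (u b)) = (\<Sum>b<r. if b = a then c b else 0)"
    using assms unfolding orthonormal_family_def by (intro sum.cong) auto
  then show ?thesis using assms(2) by simp
qed

lemma exists_unit_orthogonal_to_family:
  assumes on: "orthonormal_family n r u" and rn: "r < n"
  shows "\<exists>f. dot n f f = 1 \<and> (\<forall>a<r. dot n (u a) f = 0)"
proof -
  \<comment> \<open>Some standard basis vector e_i is not fixed by the projection Q onto span u, since
    the trace of Q is r < n; its residual e_i - Q e_i is the required vector up to scaling.\<close>
  define Q where "Q i j = (\<Sum>a<r. u a i * u a j)" for i j
  have "(\<Sum>i<n. Q i i) = (\<Sum>a<r. dot n (u a) (u a))"
    unfolding Q_def dot_def by (rule sum.swap)
  also have "\<dots> = real r" using on unfolding orthonormal_family_def by simp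
  finally have trace: "(\<Sum>i<n. Q i i) = real r" .
  obtain i j where ij: "i < n" "j < n" "(if i = j then 1 else 0) - Q i j \<noteq> 0"
  proof (rule ccontr)
    assume "\<not> thesis"
    with that have "\<And>i. i < n \<Longrightarrow> Q i i = 1" by force
    with trace rn show False by simp
  qed
  define w where "w j = (if i = j then 1 else 0) - Q i j" for j
  have w_pos: "dot n w w > 0"
    using ij dot_self_nonneg[of n w] dot_self_eq_0_iff[of n w] unfolding w_def by force
  have w_orth: "dot n (u a) w = 0" if a: "a < r" for a
  proof -
    have "dot n (u a) (\<lambda>j. if i = j then 1 else 0) = (\<Sum>j<n. if i = j then u a j else 0)"
      unfolding dot_def by (intro sum.cong) auto
    then have "dot n (u a) w = u a i - (\<Sum>j<n. u a j * Q i j)"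
      using ij(1) unfolding w_def dot_diff_right by (simp add: dot_def)
    also have "(\<Sum>j<n. u a j * Q i j) = (\<Sum>b<r. u b i * dot n (u a) (u b))"
      unfolding Q_def dot_def by (simp add: sum_distrib_left algebra_simps) (rule sum.swap)
    also have "\<dots> = u a i" by (rule orthonormal_family_dot_expansion[OF on a])
    finally show ?thesis by simp
  qed
  define f where "f j = (1 / sqrt (dot n w w)) * w j" for j
  have "dot n f f = 1"
    unfolding f_def dot_scale_left dot_scale_right using w_pos by (simp add: field_simps)
  moreover have "\<forall>a<r. dot n (u a) f = 0"
    unfolding f_def dot_scale_right using w_orth by simp
  ultimately show ?thesis by blast
qed

lemma index_mult_mat_sum:
  assumes "A \<in> carrier_mat n m" "B \<in> carrier_mat m p" "i < n" "j < p"
  shows "(A * B) $$ (i,j) = (\<Sum>k<m. A $$ (i,k) * B $$ (k,j))"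
  using assms by (simp add: scalar_prod_def atLeast0LessThan)

text \<open>Orthonormal rows give orthonormal columns because a one-sided inverse of a square
  matrix is two-sided.\<close>

lemma orthonormal_family_columns:
  assumes on: "orthonormal_family n n u" and i: "i < n" and j: "j < n"
  shows "(\<Sum>k<n. u k i * u k j) = (if i = j then 1 else 0)"
proof -
  define U where "U = Matrix.mat n n (\<lambda>(i,k). u k i)"
  have U: "U \<in> carrier_mat n n" unfolding U_def by simp
  have UT: "transpose_mat U \<in> carrier_mat n n" using U by simp
  have "transpose_mat U * U = 1\<^sub>m n"
  proof (rule eq_matI)
    fix a b assume a: "a < dim_row (1\<^sub>m n)" and b: "b < dim_col (1\<^sub>m n)"
    have "(transpose_mat U * U) $$ (a, b) = (\<Sum>k<n. u a k * u b k)"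
      using a b by (subst index_mult_mat_sum[OF UT U]) (auto simp: U_def)
    also have "\<dots> = 1\<^sub>m n $$ (a,b)" using on a b unfolding orthonormal_family_def dot_def by auto
    finally show "(transpose_mat U * U) $$ (a, b) = 1\<^sub>m n $$ (a,b)" .
  qed (use U in auto)
  then have "U * transpose_mat U = 1\<^sub>m n" by (rule mat_mult_left_right_inverse[OF UT U])
  then have "(U * transpose_mat U) $$ (i,j) = 1\<^sub>m n $$ (i,j)" by simp
  then show ?thesis using i j by (subst (asm) index_mult_mat_sum[OF U UT]) (auto simp: U_def)
qed

lemma compactin_unit_orthogonal_cube:
  fixes r :: nat
  shows "compactin (product_topology (\<lambda>_. euclideanreal) {..<n})
           {g \<in> PiE {..<n} (\<lambda>_. {-1..1}). dot n g g = 1 \<and> (\<forall>a<r. dot n (u a) g = 0)}"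
proof -
  \<comment> \<open>The constraints form the zero set of a continuous defect function.\<close>
  define X where "X = product_topology (\<lambda>_. euclideanreal) {..<n}"
  define defect where "defect g = (dot n g g - 1)\<^sup>2 + (\<Sum>a<r. (dot n (u a) g)\<^sup>2)" for g
  have proj: "continuous_map X euclideanreal (\<lambda>g. g i)" if "i \<in> {..<n}" for i
    unfolding X_def using continuous_map_product_projection[OF that, of "\<lambda>_. euclideanreal"] by simp
  have dot_cont: "continuous_map X euclideanreal (\<lambda>g. dot n v g)" for v
    unfolding dot_def by (intro continuous_intros proj finite_lessThan)
  have dot_self_cont: "continuous_map X euclideanreal (\<lambda>g. dot n g g)"
    unfolding dot_def by (intro continuous_intros proj finite_lessThan)
  have "continuous_map X euclideanreal defect"
    unfolding defect_def by (intro continuous_intros dot_self_cont dot_cont finite_lessThan) auto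
  then have "closedin X {g \<in> topspace X. defect g \<in> {0}}"
    by (rule closedin_continuous_map_preimage) (simp flip: closed_closedin)
  then have "compactin X ({g \<in> topspace X. defect g \<in> {0}} \<inter> PiE {..<n} (\<lambda>_. {-1..1}))"
    by (rule closed_Int_compactin) (simp add: X_def compactin_PiE)
  moreover have "defect g = 0 \<longleftrightarrow> dot n g g = 1 \<and> (\<forall>a<r. dot n (u a) g = 0)" for g
  proof -
    have "defect g = 0 \<longleftrightarrow> (dot n g g - 1)\<^sup>2 = 0 \<and> (\<Sum>a<r. (dot n (u a) g)\<^sup>2) = 0"
      unfolding defect_def by (simp add: add_nonneg_eq_0_iff sum_nonneg)
    also have "\<dots> \<longleftrightarrow> dot n g g = 1 \<and> (\<forall>a<r. dot n (u a) g = 0)"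
      by (simp add: sum_nonneg_eq_0_iff Ball_def)
    finally show ?thesis .
  qed
  then have "{g \<in> topspace X. defect g \<in> {0}} \<inter> PiE {..<n} (\<lambda>_. {-1..1})
      = {g \<in> PiE {..<n} (\<lambda>_. {-1..1}). dot n g g = 1 \<and> (\<forall>a<r. dot n (u a) g = 0)}"
    unfolding X_def topspace_product_topology by (auto simp: PiE_iff extensional_def)
  ultimately show ?thesis unfolding X_def by simp
qed

lemma rayleigh_quotient_attains_max:
  fixes r :: nat
  assumes "\<exists>f. dot n f f = 1 \<and> (\<forall>a<r. dot n (u a) f = 0)"
  shows "\<exists>f. dot n f f = 1 \<and> (\<forall>a<r. dot n (u a) f = 0) \<and>
    (\<forall>g. dot n g g = 1 \<and> (\<forall>a<r. dot n (u a) g = 0) \<longrightarrow> dot n g (matvec n A g) \<le> dot n f (matvec n A f))"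
proof -
  \<comment> \<open>Maximize over the vectors restricted to {..<n}, which lie in the cube [-1,1]^n.\<close>
  define X where "X = product_topology (\<lambda>_. euclideanreal) {..<n}"
  define C where "C = {g \<in> PiE {..<n} (\<lambda>_. {-1..1}). dot n g g = 1 \<and> (\<forall>a<r. dot n (u a) g = 0)}"
  define q where "q g = dot n g (matvec n A g)" for g
  have proj: "continuous_map X euclideanreal (\<lambda>g. g i)" if "i \<in> {..<n}" for i
    unfolding X_def using continuous_map_product_projection[OF that, of "\<lambda>_. euclideanreal"] by simp
  have "continuous_map X euclideanreal q"
    unfolding q_def dot_def matvec_def by (intro continuous_intros proj finite_lessThan)
  then have q_compact: "compact (q ` C)"
    using image_compactin compactin_unit_orthogonal_cube unfolding C_def X_def by fastforce
  have restrict_in_C: "restrict g {..<n} \<in> C" if g: "dot n g g = 1" "\<forall>a<r. dot n (u a) g = 0" for g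
  proof -
    have "\<bar>g i\<bar> \<le> 1" if "i < n" for i
      using square_le_dot_self[OF that, of g] g(1) by (simp add: abs_square_le_1)
    then show ?thesis using g by (force simp: C_def dot_restrict_left dot_restrict_right abs_le_iff)
  qed
  from assms have "q ` C \<noteq> {}" using restrict_in_C by blast
  from compact_attains_sup[OF q_compact this] obtain f where f: "f \<in> C" "\<forall>g\<in>C. q g \<le> q f"
    by blast
  show ?thesis
  proof (intro exI conjI)
    show "dot n f f = 1" "\<forall>a<r. dot n (u a) f = 0" using f(1) by (auto simp: C_def)
    show "\<forall>g. dot n g g = 1 \<and> (\<forall>a<r. dot n (u a) g = 0) \<longrightarrow>
        dot n g (matvec n A g) \<le> dot n f (matvec n A f)"
    proof (intro allI impI)
      fix g assume "dot n g g = 1 \<and> (\<forall>a<r. dot n (u a) g = 0)"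
      then have "q (restrict g {..<n}) \<le> q f" using f(2) restrict_in_C by blast
      then show "dot n g (matvec n A g) \<le> dot n f (matvec n A f)"
        unfolding q_def matvec_restrict dot_restrict_left by simp
    qed
  qed
qed

lemma nonpos_if_quadratic_nonpos_at_pos:
  fixes Z B :: real
  assumes "\<And>t. t > 0 \<Longrightarrow> 2 * t * Z + t\<^sup>2 * B \<le> 0"
  shows "Z \<le> 0"
proof (rule ccontr)
  assume "\<not> Z \<le> 0"
  then have Z: "Z > 0" by simp
  define t where "t = Z / (\<bar>B\<bar> + 1)"
  have t: "t > 0" using Z unfolding t_def by (simp add: add_nonneg_pos)
  have "t * \<bar>B\<bar> = Z * (\<bar>B\<bar> / (\<bar>B\<bar> + 1))" unfolding t_def by simp
  also have "\<dots> < Z * 1" using Z by (intro mult_strict_left_mono) auto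
  finally have tB: "t * \<bar>B\<bar> < Z" by simp
  have "t * (2 * Z + t * B) \<le> 0" using assms[OF t] by (simp add: power2_eq_square algebra_simps)
  then have "2 * Z + t * B \<le> 0" using t by (simp add: mult_le_0_iff)
  moreover have "t * (- B) \<le> t * \<bar>B\<bar>" using t by (intro mult_left_mono) auto
  ultimately show False using tB Z by linarith
qed

lemma rayleigh_max_le:
  fixes r :: nat
  assumes f_max: "\<forall>g. dot n g g = 1 \<and> (\<forall>a<r. dot n (u a) g = 0) \<longrightarrow>
                  dot n g (matvec n A g) \<le> dot n f (matvec n A f)"
    and g_orth: "\<forall>a<r. dot n (u a) g = 0" and g_pos: "dot n g g > 0"
  shows "dot n g (matvec n A g) \<le> dot n f (matvec n A f) * dot n g g"
proof -
  define s where "s = 1 / sqrt (dot n g g)"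
  have s2: "s\<^sup>2 = 1 / dot n g g" unfolding s_def using g_pos by (simp add: power_divide)
  define h where "h i = s * g i" for i
  have "dot n h h = 1" unfolding h_def dot_scale_left dot_scale_right
    using s2 g_pos by (simp add: power2_eq_square field_simps)
  moreover have "\<forall>a<r. dot n (u a) h = 0" unfolding h_def using g_orth by (simp add: dot_scale_right)
  ultimately have "dot n h (matvec n A h) \<le> dot n f (matvec n A f)" using f_max by blast
  moreover have "dot n h (matvec n A h) = s\<^sup>2 * dot n g (matvec n A g)"
    unfolding h_def matvec_scale dot_scale_left dot_scale_right by (simp add: power2_eq_square)
  ultimately show ?thesis using s2 g_pos by (simp add: divide_le_eq)
qed

lemma rayleigh_maximizer_first_order:
  fixes r :: nat
  assumes S: "symmetric_matrix n A" and f1: "dot n f f = 1" and f_orth: "\<forall>a<r. dot n (u a) f = 0"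
    and f_max: "\<forall>g. dot n g g = 1 \<and> (\<forall>a<r. dot n (u a) g = 0) \<longrightarrow>
                  dot n g (matvec n A g) \<le> dot n f (matvec n A f)"
    and z_orth: "\<forall>a<r. dot n (u a) z = 0" and zf: "dot n f z = 0"
  shows "dot n z (matvec n A f) \<le> 0"
proof -
  define c where "c = dot n f (matvec n A f)"
  define Z where "Z = dot n z z"
  define b where "b = dot n z (matvec n A z)"
  have fAz: "dot n f (matvec n A z) = dot n z (matvec n A f)"
    using dot_matvec_symmetric[OF S, of f z] dot_commute[of n "matvec n A f" z] by simp
  have "2 * t * dot n z (matvec n A f) + t\<^sup>2 * (b - c * Z) \<le> 0" if "t > 0" for t
  proof -
    define g where "g i = f i + t * z i" for i
    have "dot n g g = 1 + t\<^sup>2 * Z"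
      unfolding g_def using f1 zf dot_commute[of n z f]
      by (simp add: dot_add_left dot_add_right dot_scale_left dot_scale_right Z_def power2_eq_square algebra_simps)
    moreover have "dot n g (matvec n A g) = c + 2 * t * dot n z (matvec n A f) + t\<^sup>2 * b"
      unfolding g_def matvec_add_scaled using fAz
      by (simp add: dot_add_left dot_add_right dot_scale_left dot_scale_right c_def b_def power2_eq_square algebra_simps)
    moreover have "1 + t\<^sup>2 * Z > 0" using dot_self_nonneg[of n z] by (simp add: Z_def add_pos_nonneg)
    moreover have "\<forall>a<r. dot n (u a) g = 0"
      unfolding g_def using f_orth z_orth by (simp add: dot_scale_right dot_add_right)
    ultimately have "c + 2 * t * dot n z (matvec n A f) + t\<^sup>2 * b \<le> c * (1 + t\<^sup>2 * Z)"
      using rayleigh_max_le[OF f_max, of g] unfolding c_def by simp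
    then show ?thesis by (simp add: algebra_simps)
  qed
  then show ?thesis by (rule nonpos_if_quadratic_nonpos_at_pos)
qed
text \<open>A maximizer of the Rayleigh quotient on the orthogonal complement of an invariant
  orthonormal family is an eigenvector: its residual z = A f - c f is orthogonal to the family
  and to f, so by the first-order condition |z|^2 = <z, A f> \<le> 0.\<close>

lemma exists_eigenvector_orthogonal_to_family:
  fixes r :: nat
  assumes S: "symmetric_matrix n A" and on: "orthonormal_family n r u"
    and ev: "\<forall>a<r. \<forall>i<n. matvec n A (u a) i = lam a * u a i" and rn: "r < n"
  shows "\<exists>f c. dot n f f = 1 \<and> (\<forall>a<r. dot n (u a) f = 0) \<and> (\<forall>i<n. matvec n A f i = c * f i)"
proof -
  obtain f where f1: "dot n f f = 1" and f_orth: "\<forall>a<r. dot n (u a) f = 0"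
    and f_max: "\<forall>g. dot n g g = 1 \<and> (\<forall>a<r. dot n (u a) g = 0) \<longrightarrow>
                  dot n g (matvec n A g) \<le> dot n f (matvec n A f)"
    using rayleigh_quotient_attains_max[where A = A, OF exists_unit_orthogonal_to_family[OF on rn]]
    by blast
  define c where "c = dot n f (matvec n A f)"
  define z where "z i = matvec n A f i - c * f i" for i
  have z_orth: "dot n (u a) z = 0" if a: "a < r" for a
  proof -
    have "dot n (u a) (matvec n A f) = dot n (matvec n A (u a)) f"
      by (rule dot_matvec_symmetric[OF S])
    also have "\<dots> = dot n (\<lambda>i. lam a * u a i) f" using ev a by (intro dot_cong) auto
    also have "\<dots> = 0" using f_orth a by (simp add: dot_scale_left)
    finally have "dot n (u a) (matvec n A f) = 0" .
    then show ?thesis using f_orth a unfolding z_def dot_diff_right dot_scale_right by simp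
  qed
  have zf: "dot n f z = 0" unfolding z_def dot_diff_right dot_scale_right c_def using f1 by simp
  have "dot n z (matvec n A f) = dot n z (\<lambda>i. z i + c * f i)" by (intro dot_cong) (auto simp: z_def)
  also have "\<dots> = dot n z z" using zf dot_commute[of n z f] by (simp add: dot_add_right dot_scale_right)
  finally have "dot n z z \<le> 0"
    using rayleigh_maximizer_first_order[OF S f1 f_orth f_max _ zf] z_orth by simp
  then have "\<forall>i<n. z i = 0" using dot_self_nonneg[of n z] dot_self_eq_0_iff[of n z] by simp
  then have "\<forall>i<n. matvec n A f i = c * f i" unfolding z_def by simp
  with f1 f_orth show ?thesis by blast
qed

lemma orthonormal_family_extend:
  assumes on: "orthonormal_family n r u" and f: "dot n f f = 1" "\<forall>a<r. dot n (u a) f = 0"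
  shows "orthonormal_family n (Suc r) (u(r := f))"
  unfolding orthonormal_family_def
proof (intro allI impI)
  fix a b assume "a < Suc r" "b < Suc r"
  then consider "a < r" "b < r" | "a = r" "b < r" | "a < r" "b = r" | "a = r" "b = r"
    by (auto simp: less_Suc_eq)
  then show "dot n ((u(r := f)) a) ((u(r := f)) b) = (if a = b then 1 else 0)"
  proof cases
    case 1
    then show ?thesis using on unfolding orthonormal_family_def by simp
  next
    case 2
    then show ?thesis using f(2) dot_commute[of n f "u b"] by simp
  next
    case 3
    then show ?thesis using f(2) by simp
  next
    case 4
    then show ?thesis using f(1) by simp
  qed
qed

lemma symmetric_matrix_orthonormal_eigenvectors:
  assumes S: "symmetric_matrix n A" and "r \<le> n"
  shows "\<exists>u lam. orthonormal_family n r u \<and> (\<forall>a<r. \<forall>i<n. matvec n A (u a) i = lam a * u a i)"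
  using \<open>r \<le> n\<close>
proof (induction r)
  case 0
  then show ?case unfolding orthonormal_family_def by auto
next
  case (Suc r)
  then obtain u lam where on: "orthonormal_family n r u"
    and ev: "\<forall>a<r. \<forall>i<n. matvec n A (u a) i = lam a * u a i" by auto
  obtain f c where f: "dot n f f = 1" "\<forall>a<r. dot n (u a) f = 0" "\<forall>i<n. matvec n A f i = c * f i"
    using exists_eigenvector_orthogonal_to_family[OF S on ev] Suc.prems by auto
  have "orthonormal_family n (Suc r) (u(r := f))"
    using orthonormal_family_extend[OF on f(1,2)] .
  moreover have "\<forall>a<Suc r. \<forall>i<n. matvec n A ((u(r := f)) a) i = (lam(r := c)) a * (u(r := f)) a i"
  proof (intro allI impI)
    fix a i assume "a < Suc r" "i < n"
    then show "matvec n A ((u(r := f)) a) i = (lam(r := c)) a * (u(r := f)) a i"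
      using ev f(3) by (cases "a = r") (simp_all add: less_Suc_eq)
  qed
  ultimately show ?case by blast
qed

lemma sum_filter_atLeast0LessThan:
  "sum f {w \<in> {0..<n}. P w} = (\<Sum>w<n. if P w then f w else 0)" for n :: nat
proof -
  have "{w \<in> {0..<n}. P w} = {w \<in> {..<n}. P w}" by auto
  then show ?thesis by (metis finite_lessThan sum.inter_filter)
qed

locale connected_simple_graph =
  fixes N :: nat and E :: "nat \<Rightarrow> nat \<Rightarrow> bool"
  assumes simple: "simple_graph N E" and connected: "connected_graph N E" and two_le_N: "N \<ge> 2"
begin

definition d :: "nat \<Rightarrow> real" where "d v = real (deg N E v)"

lemma edge_bounds: "E v w \<Longrightarrow> v < N \<and> w < N" using simple unfolding simple_graph_def by blast
lemma edge_sym: "E v w \<Longrightarrow> E w v" using simple unfolding simple_graph_def by blast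
lemma edge_irrefl: "\<not> E v v" using simple unfolding simple_graph_def by blast

lemma degree_eq_sum: "d i = (\<Sum>w<N. if E i w then 1 else 0)"
proof -
  have "d i = (\<Sum>w\<in>{w \<in> {0..<N}. E i w}. 1)" unfolding d_def deg_def by simp
  also have "\<dots> = (\<Sum>w<N. if E i w then 1 else 0)" by (rule sum_filter_atLeast0LessThan)
  finally show ?thesis .
qed

lemma degree_pos: assumes v: "v < N" shows "d v > 0"
proof -
  define w where "w = (if v = 0 then 1 else 0::nat)"
  have w: "w < N" "w \<noteq> v" using two_le_N unfolding w_def by auto
  have "E\<^sup>*\<^sup>* v w" using connected v w unfolding connected_graph_def by blast
  then obtain z where z: "E v z" using w(2) by (metis converse_rtranclpE)
  then have "z < N" using edge_bounds by blast
  have "0 < (\<Sum>w\<in>{z}. if E v w then 1 else (0::real))" using z by simp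
  also have "\<dots> \<le> (\<Sum>w<N. if E v w then 1 else 0)"
    using \<open>z < N\<close> by (intro sum_mono2) auto
  finally show ?thesis unfolding degree_eq_sum .
qed

lemma degree_nonneg: "v < N \<Longrightarrow> d v \<ge> 0" using degree_pos by (simp add: less_imp_le)

definition norm_adj :: "nat \<Rightarrow> nat \<Rightarrow> real" where
  "norm_adj i j = (if E i j then 1 / sqrt (d i * d j) else 0)"

lemma symmetric_norm_adj: "symmetric_matrix N norm_adj"
  unfolding symmetric_matrix_def norm_adj_def using edge_sym by (auto simp: mult.commute)

lemma laplacian_apply_eq_sum: "laplacian_apply N E x v = (\<Sum>w<N. if E v w then x v - x w else 0)"
proof -
  have "laplacian_apply N E x v = d v * x v - (\<Sum>w<N. if E v w then x w else 0)"
    unfolding laplacian_apply_def d_def sum_filter_atLeast0LessThan ..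
  also have "d v * x v = (\<Sum>w<N. if E v w then x v else 0)"
    unfolding degree_eq_sum sum_distrib_right by (intro sum.cong) auto
  finally show ?thesis by (simp add: sum_subtractf[symmetric] if_distrib cong: if_cong)
qed

lemma laplacian_form: "(\<Sum>v<N. x v * laplacian_apply N E x v) =
    (1/2) * (\<Sum>v<N. \<Sum>w<N. if E v w then (x v - x w)\<^sup>2 else 0)"
proof -
  define T1 where "T1 = (\<Sum>v<N. \<Sum>w<N. if E v w then (x v)\<^sup>2 - x v * x w else 0)"
  define T2 where "T2 = (\<Sum>v<N. \<Sum>w<N. if E v w then (x w)\<^sup>2 - x v * x w else 0)"
  have L: "(\<Sum>v<N. x v * laplacian_apply N E x v) = T1"
    unfolding T1_def laplacian_apply_eq_sum sum_distrib_left
    by (intro sum.cong refl) (auto simp: power2_eq_square algebra_simps)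
  have "T2 = (\<Sum>w<N. \<Sum>v<N. if E v w then (x w)\<^sup>2 - x v * x w else 0)"
    unfolding T2_def by (rule sum.swap)
  also have "\<dots> = T1" unfolding T1_def
    by (intro sum.cong refl) (auto simp: edge_sym mult.commute)
  finally have T21: "T2 = T1" .
  have "(\<Sum>v<N. \<Sum>w<N. if E v w then (x v - x w)\<^sup>2 else 0) = T1 + T2"
    unfolding T1_def T2_def sum.distrib[symmetric]
    by (intro sum.cong refl) (auto simp: power2_eq_square algebra_simps)
  then show ?thesis using L T21 by simp
qed

lemma laplacian_form_nonneg: "(\<Sum>v<N. x v * laplacian_apply N E x v) \<ge> 0"
  unfolding laplacian_form by (intro mult_nonneg_nonneg sum_nonneg) auto

lemma laplacian_kernel_const:
  assumes z: "\<forall>v<N. laplacian_apply N E x v = 0" and v: "v < N" and w: "w < N"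
  shows "x v = x w"
proof -
  have "(\<Sum>v<N. \<Sum>w<N. if E v w then (x v - x w)\<^sup>2 else 0) = 0"
    using laplacian_form[of x] z by simp
  then have "\<forall>v<N. (\<Sum>w<N. if E v w then (x v - x w)\<^sup>2 else 0) = 0"
    by (subst (asm) sum_nonneg_eq_0_iff) (auto intro: sum_nonneg)
  then have all: "\<forall>v<N. \<forall>w<N. (if E v w then (x v - x w)\<^sup>2 else 0) = 0"
    by (auto simp: sum_nonneg_eq_0_iff)
  have edge: "x a = x b" if "E a b" for a b
  proof -
    have ab: "a < N" "b < N" using edge_bounds that by auto
    have "(if E a b then (x a - x b)\<^sup>2 else 0) = 0" using all ab by blast
    then show ?thesis using that by simp
  qed
  have "E\<^sup>*\<^sup>* v w" using connected v w unfolding connected_graph_def by blast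
  then show ?thesis by (induction rule: rtranclp_induct) (auto dest: edge)
qed

lemma laplacian_apply_norm_adj:
  assumes v: "v < N"
  shows "laplacian_apply N E (\<lambda>w. f w / sqrt (d w)) v = sqrt (d v) * (f v - matvec N norm_adj f v)"
proof -
  have dv: "d v > 0" using degree_pos[OF v] .
  have "laplacian_apply N E (\<lambda>w. f w / sqrt (d w)) v
      = (\<Sum>w<N. if E v w then f v / sqrt (d v) - f w / sqrt (d w) else 0)" by (rule laplacian_apply_eq_sum)
  also have "\<dots> = (\<Sum>w<N. if E v w then f v / sqrt (d v) else 0) - (\<Sum>w<N. if E v w then f w / sqrt (d w) else 0)"
    by (simp add: sum_subtractf[symmetric] if_distrib cong: if_cong)
  also have "(\<Sum>w<N. if E v w then f v / sqrt (d v) else 0) = d v * (f v / sqrt (d v))"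
    unfolding degree_eq_sum sum_distrib_right by (intro sum.cong) auto
  also have "d v * (f v / sqrt (d v)) = sqrt (d v) * f v"
    using dv by (simp add: field_simps real_div_sqrt)
  also have "(\<Sum>w<N. if E v w then f w / sqrt (d w) else 0) = sqrt (d v) * matvec N norm_adj f v"
    unfolding matvec_def norm_adj_def sum_distrib_left
    using dv by (intro sum.cong refl) (auto simp: real_sqrt_mult field_simps)
  finally show ?thesis by (simp add: algebra_simps)
qed

lemma laplacian_apply_sum:
  assumes "finite I"
  shows "laplacian_apply N E (\<lambda>v. \<Sum>k\<in>I. c k * g k v) w = (\<Sum>k\<in>I. c k * laplacian_apply N E (g k) w)"
proof -
  have "laplacian_apply N E (\<lambda>v. \<Sum>k\<in>I. c k * g k v) w
      = (\<Sum>x<N. \<Sum>k\<in>I. c k * (if E w x then g k w - g k x else 0))"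
    unfolding laplacian_apply_eq_sum
  proof (intro sum.cong refl)
    fix x
    show "(if E w x then (\<Sum>k\<in>I. c k * g k w) - (\<Sum>k\<in>I. c k * g k x) else 0)
        = (\<Sum>k\<in>I. c k * (if E w x then g k w - g k x else 0))"
      by (cases "E w x") (simp_all add: sum_subtractf[symmetric] right_diff_distrib)
  qed
  also have "\<dots> = (\<Sum>k\<in>I. \<Sum>x<N. c k * (if E w x then g k w - g k x else 0))" by (rule sum.swap)
  also have "\<dots> = (\<Sum>k\<in>I. c k * laplacian_apply N E (g k) w)"
    unfolding laplacian_apply_eq_sum sum_distrib_left ..
  finally show ?thesis .
qed

lemma laplacian_apply_diff: "laplacian_apply N E (\<lambda>v. x v - y v) w = laplacian_apply N E x w - laplacian_apply N E y w"
  unfolding laplacian_apply_eq_sum by (simp add: sum_subtractf[symmetric] if_distrib algebra_simps cong: if_cong)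

lemma sum_degree_eq_twice_num_edges: "(\<Sum>v<N. d v) = 2 * real (num_edges N E)"
proof -
  define D where "D = {(v,w). v < N \<and> w < N \<and> E v w}"
  define D1 where "D1 = {(v,w). v < w \<and> w < N \<and> E v w}"
  define D2 where "D2 = {(v,w). w < v \<and> v < N \<and> E v w}"
  have DS: "D = Sigma {..<N} (\<lambda>v. {w \<in> {0..<N}. E v w})" unfolding D_def by auto
  have fD: "finite D" unfolding DS by auto
  have cD: "card D = (\<Sum>v<N. deg N E v)" unfolding DS deg_def by (subst card_SigmaI) auto
  have U: "D = D1 \<union> D2"
  proof
    show "D \<subseteq> D1 \<union> D2"
    proof
      fix p assume "p \<in> D"
      then obtain v w where p: "p = (v,w)" "v < N" "w < N" "E v w" unfolding D_def by auto
      then have "v \<noteq> w" using edge_irrefl by auto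
      then show "p \<in> D1 \<union> D2" using p unfolding D1_def D2_def by (auto simp: neq_iff)
    qed
    show "D1 \<union> D2 \<subseteq> D" unfolding D_def D1_def D2_def by auto
  qed
  have I: "D1 \<inter> D2 = {}" unfolding D1_def D2_def by auto
  have sw: "D2 = prod.swap ` D1"
  proof
    show "D2 \<subseteq> prod.swap ` D1"
    proof
      fix p assume "p \<in> D2"
      then obtain v w where p: "p = (v,w)" "w < v" "v < N" "E v w" unfolding D2_def by auto
      then have "(w,v) \<in> D1" unfolding D1_def using edge_sym by auto
      then show "p \<in> prod.swap ` D1" using p(1) by (intro image_eqI[of _ _ "(w,v)"]) auto
    qed
    show "prod.swap ` D1 \<subseteq> D2" unfolding D1_def D2_def using edge_sym by auto
  qed
  have fD1: "finite D1" and fD2: "finite D2" using fD U by auto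
  have "card D2 = card D1" unfolding sw by (rule card_image) simp
  then have "card D = 2 * card D1" using card_Un_disjoint[OF fD1 fD2 I] U by simp
  moreover have "num_edges N E = card D1" unfolding num_edges_def D1_def ..
  ultimately have "(\<Sum>v<N. deg N E v) = 2 * num_edges N E" using cD by simp
  then show ?thesis unfolding d_def by (metis of_nat_mult of_nat_numeral of_nat_sum)
qed

end
locale graph_eigenbasis = connected_simple_graph +
  fixes u :: "nat \<Rightarrow> nat \<Rightarrow> real" and lam :: "nat \<Rightarrow> real"
  assumes orthonormal: "orthonormal_family N N u"
    and eigen: "\<forall>a<N. \<forall>i<N. matvec N norm_adj (u a) i = lam a * u a i"
begin

lemma dot_eigvec: "a < N \<Longrightarrow> b < N \<Longrightarrow> dot N (u a) (u b) = (if a = b then 1 else 0)"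
  using orthonormal unfolding orthonormal_family_def by blast

lemma eigvec: "a < N \<Longrightarrow> i < N \<Longrightarrow> matvec N norm_adj (u a) i = lam a * u a i"
  using eigen by blast

lemma eigvec_columns: "i < N \<Longrightarrow> j < N \<Longrightarrow> (\<Sum>k<N. u k i * u k j) = (if i = j then 1 else 0)"
  using orthonormal_family_columns[OF orthonormal] by blast

lemma eigvec_expansion:
  assumes v: "v < N"
  shows "f v = (\<Sum>k<N. dot N (u k) f * u k v)"
proof -
  have "(\<Sum>k<N. dot N (u k) f * u k v) = (\<Sum>k<N. \<Sum>j<N. u k j * f j * u k v)"
    unfolding dot_def sum_distrib_right ..
  also have "\<dots> = (\<Sum>j<N. \<Sum>k<N. u k j * f j * u k v)" by (rule sum.swap)
  also have "\<dots> = (\<Sum>j<N. f j * (\<Sum>k<N. u k j * u k v))"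
    by (simp add: sum_distrib_left algebra_simps)
  also have "\<dots> = (\<Sum>j<N. f j * (if j = v then 1 else 0))"
    by (intro sum.cong refl) (simp add: eigvec_columns v)
  also have "\<dots> = f v" using v by (simp add: if_distrib cong: if_cong)
  finally show ?thesis by simp
qed

lemma norm_adj_spectral_expansion:
  assumes i: "i < N" and j: "j < N"
  shows "norm_adj i j = (\<Sum>k<N. lam k * u k i * u k j)"
proof -
  have "norm_adj i j = (\<Sum>k<N. dot N (u k) (norm_adj i) * u k j)" by (rule eigvec_expansion[OF j])
  also have "\<dots> = (\<Sum>k<N. lam k * u k i * u k j)"
  proof (intro sum.cong refl)
    fix k assume k: "k \<in> {..<N}"
    have "dot N (u k) (norm_adj i) = matvec N norm_adj (u k) i" unfolding dot_def matvec_def by (simp add: mult.commute)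
    also have "\<dots> = lam k * u k i" using eigvec k i by simp
    finally show "dot N (u k) (norm_adj i) * u k j = lam k * u k i * u k j" by simp
  qed
  finally show ?thesis .
qed

lemma eigenvalue_le_1:
  assumes f1: "dot N f f = 1" and ev: "\<forall>v<N. matvec N norm_adj f v = c * f v"
  shows "c \<le> 1"
proof -
  define a where "a w = f w / sqrt (d w)" for w
  have "(\<Sum>v<N. a v * laplacian_apply N E a v) = (\<Sum>v<N. (1 - c) * (f v * f v))"
  proof (intro sum.cong refl)
    fix v assume v: "v \<in> {..<N}"
    then have dv: "d v > 0" using degree_pos by simp
    have L: "laplacian_apply N E a v = sqrt (d v) * ((1 - c) * f v)"
      unfolding a_def using laplacian_apply_norm_adj[of v f] v ev by (simp add: algebra_simps)
    have "a v * laplacian_apply N E a v = (f v / sqrt (d v) * sqrt (d v)) * ((1 - c) * f v)"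
      unfolding L a_def by (simp only: mult.assoc)
    also have "f v / sqrt (d v) * sqrt (d v) = f v" using dv by simp
    finally show "a v * laplacian_apply N E a v = (1 - c) * (f v * f v)" by (simp add: algebra_simps)
  qed
  also have "\<dots> = 1 - c" using f1 unfolding dot_def by (simp add: sum_distrib_left[symmetric])
  finally show ?thesis using laplacian_form_nonneg[of a] by simp
qed

lemma eigval_le_1: "k < N \<Longrightarrow> lam k \<le> 1"
  using eigenvalue_le_1[of "u k" "lam k"] dot_eigvec eigvec by simp

lemma eigenvector_1_form:
  assumes ev: "\<forall>v<N. matvec N norm_adj f v = f v"
  shows "\<exists>c. \<forall>v<N. f v = c * sqrt (d v)"
proof -
  define a where "a w = f w / sqrt (d w)" for w
  have z: "\<forall>v<N. laplacian_apply N E a v = 0"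
  proof (intro allI impI)
    fix v assume v: "v < N"
    show "laplacian_apply N E a v = 0" unfolding a_def laplacian_apply_norm_adj[OF v] using ev v by simp
  qed
  have const: "a v = a 0" if "v < N" for v
    using laplacian_kernel_const[OF z that, of 0] two_le_N by simp
  show ?thesis
  proof (intro exI allI impI)
    fix v assume v: "v < N"
    have "d v > 0" using degree_pos v by simp
    then have "f v = a v * sqrt (d v)" unfolding a_def by simp
    then show "f v = a 0 * sqrt (d v)" using const[OF v] by simp
  qed
qed

definition vol :: real where "vol = (\<Sum>v<N. d v)"

lemma vol_pos: "vol > 0"
proof -
  have "0 < d 0" using degree_pos two_le_N by simp
  also have "\<dots> \<le> vol" unfolding vol_def using two_le_N degree_nonneg by (intro member_le_sum) auto
  finally show ?thesis .
qed

definition sqrt_deg :: "nat \<Rightarrow> real" where "sqrt_deg v = sqrt (d v)"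
lemma norm_adj_sqrt_deg: assumes v: "v < N" shows "matvec N norm_adj sqrt_deg v = sqrt_deg v"
proof -
  have dv: "d v > 0" using degree_pos v by simp
  have "matvec N norm_adj sqrt_deg v = (\<Sum>w<N. if E v w then 1 / sqrt (d v) else 0)"
    unfolding matvec_def norm_adj_def sqrt_deg_def
  proof (intro sum.cong refl)
    fix w assume w: "w \<in> {..<N}"
    show "(if E v w then 1 / sqrt (d v * d w) else 0) * sqrt (d w) = (if E v w then 1 / sqrt (d v) else 0)"
    proof (cases "E v w")
      case True
      then have "d w > 0" using degree_pos edge_bounds by blast
      then show ?thesis using True dv by (simp add: real_sqrt_mult)
    qed simp
  qed
  also have "\<dots> = d v * (1 / sqrt (d v))" unfolding degree_eq_sum sum_distrib_right by (intro sum.cong) auto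
  also have "\<dots> = sqrt_deg v" unfolding sqrt_deg_def using dv by (simp add: real_div_sqrt)
  finally show ?thesis .
qed

lemma dot_eigvec_eigenvector:
  assumes k: "k < N" and ev: "\<forall>v<N. matvec N norm_adj x v = \<mu> * x v"
  shows "(\<mu> - lam k) * dot N (u k) x = 0"
proof -
  have "dot N (u k) (matvec N norm_adj x) = dot N (u k) (\<lambda>v. \<mu> * x v)"
    using ev by (intro dot_cong) auto
  then have "\<mu> * dot N (u k) x = dot N (matvec N norm_adj (u k)) x"
    by (simp add: dot_scale_right dot_matvec_symmetric[OF symmetric_norm_adj])
  also have "\<dots> = dot N (\<lambda>v. lam k * u k v) x" using k by (intro dot_cong) (auto simp: eigvec)
  also have "\<dots> = lam k * dot N (u k) x" by (rule dot_scale_left)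
  finally show ?thesis by (simp add: algebra_simps)
qed

lemma exists_eigval_of_eigenvector:
  assumes ev: "\<forall>v<N. matvec N norm_adj x v = \<mu> * x v" and v: "v < N" "x v \<noteq> 0"
  shows "\<exists>k<N. lam k = \<mu>"
proof (rule ccontr)
  assume "\<not> ?thesis"
  then have "\<forall>k<N. dot N (u k) x = 0" using dot_eigvec_eigenvector[OF _ ev] by force
  then show False using eigvec_expansion[OF v(1), of x] v(2) by simp
qed

lemma exists_eigenvalue_1: "\<exists>k<N. lam k = 1"
  using exists_eigval_of_eigenvector[of sqrt_deg 1 0] norm_adj_sqrt_deg two_le_N degree_pos[of 0]
  by (simp add: sqrt_deg_def)

lemma eigenvector_1_dot:
  assumes "\<forall>v<N. f v = c * sqrt (d v)" "\<forall>v<N. g v = c' * sqrt (d v)"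
  shows "dot N f g = c * c' * vol"
proof -
  have "dot N f g = dot N (\<lambda>v. c * sqrt (d v)) (\<lambda>v. c' * sqrt (d v))"
    using assms by (intro dot_cong) auto
  also have "\<dots> = c * c' * vol"
    unfolding dot_def vol_def sum_distrib_left
    by (intro sum.cong refl) (auto simp: degree_nonneg algebra_simps)
  finally show ?thesis .
qed

lemma unit_eigenvector_1_square:
  assumes f1: "dot N f f = 1" and ev: "\<forall>v<N. matvec N norm_adj f v = f v" and v: "v < N"
  shows "(f v)\<^sup>2 = d v / vol"
proof -
  obtain c where c: "\<forall>v<N. f v = c * sqrt (d v)" using eigenvector_1_form[OF ev] by blast
  then have "c * c = 1 / vol" using f1 eigenvector_1_dot[OF c c] vol_pos by (simp add: field_simps)
  moreover have "(f v)\<^sup>2 = c * c * d v" using c v degree_nonneg[OF v] by (simp add: power2_eq_square)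
  ultimately show ?thesis by simp
qed

lemma eigvec_1_square: "k < N \<Longrightarrow> lam k = 1 \<Longrightarrow> v < N \<Longrightarrow> (u k v)\<^sup>2 = d v / vol"
  using unit_eigenvector_1_square[of "u k"] dot_eigvec eigvec by simp

lemma eigenvalue_1_unique:
  assumes k: "k < N" "lam k = 1" and k': "k' < N" "lam k' = 1"
  shows "k = k'"
proof (rule ccontr)
  assume ne: "k \<noteq> k'"
  obtain c where c: "\<forall>v<N. u k v = c * sqrt (d v)" using eigenvector_1_form eigvec k by force
  obtain c' where c': "\<forall>v<N. u k' v = c' * sqrt (d v)" using eigenvector_1_form eigvec k' by force
  have "c * c * vol = 1" "c' * c' * vol = 1" "c * c' * vol = 0"
    using eigenvector_1_dot[OF c c] eigenvector_1_dot[OF c' c'] eigenvector_1_dot[OF c c']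
      dot_eigvec k k' ne by auto
  then show False using vol_pos by auto
qed

lemma walk_eigvec_1_const:
  assumes k: "k < N" "lam k = 1" and i: "i < N" and j: "j < N"
  shows "u k i / sqrt (d i) = u k j / sqrt (d j)"
proof -
  obtain c where c: "\<forall>v<N. u k v = c * sqrt (d v)" using eigenvector_1_form eigvec k by force
  then show ?thesis using i j degree_pos[OF i] degree_pos[OF j] by simp
qed

lemma sum_eigenvalues_eq_0: "(\<Sum>k<N. lam k) = 0"
proof -
  have "(\<Sum>k<N. lam k) = (\<Sum>k<N. dot N (u k) (matvec N norm_adj (u k)))"
  proof (intro sum.cong refl)
    fix k assume k: "k \<in> {..<N}"
    have "dot N (u k) (matvec N norm_adj (u k)) = dot N (u k) (\<lambda>i. lam k * u k i)" using k by (intro dot_cong) (auto simp: eigvec)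
    also have "\<dots> = lam k" using dot_eigvec k by (simp add: dot_scale_right)
    finally show "lam k = dot N (u k) (matvec N norm_adj (u k))" by simp
  qed
  also have "\<dots> = (\<Sum>k<N. \<Sum>i<N. \<Sum>j<N. norm_adj i j * (u k i * u k j))"
  proof (intro sum.cong refl)
    fix k
    show "dot N (u k) (matvec N norm_adj (u k)) = (\<Sum>i<N. \<Sum>j<N. norm_adj i j * (u k i * u k j))"
      unfolding dot_def matvec_def sum_distrib_left by (simp add: ac_simps)
  qed
  also have "\<dots> = (\<Sum>i<N. \<Sum>k<N. \<Sum>j<N. norm_adj i j * (u k i * u k j))" by (rule sum.swap)
  also have "\<dots> = (\<Sum>i<N. \<Sum>j<N. \<Sum>k<N. norm_adj i j * (u k i * u k j))" by (rule sum.cong[OF refl], rule sum.swap)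
  also have "\<dots> = (\<Sum>i<N. \<Sum>j<N. norm_adj i j * (if i = j then 1 else 0))"
    by (intro sum.cong refl) (simp add: sum_distrib_left[symmetric] eigvec_columns)
  also have "\<dots> = (\<Sum>i<N. norm_adj i i)" by (intro sum.cong refl) (simp add: if_distrib cong: if_cong)
  also have "\<dots> = 0" by (simp add: norm_adj_def edge_irrefl)
  finally show ?thesis .
qed

end

lemma sum_upper_triangle_symmetric:
  fixes g :: "nat \<Rightarrow> nat \<Rightarrow> real"
  assumes sym: "\<And>i j. g i j = g j i" and diag: "\<And>i. g i i = 0"
  shows "2 * (\<Sum>j<n. \<Sum>i<j. g i j) = (\<Sum>i<n. \<Sum>j<n. g i j)"
proof (induction n)
  case 0 then show ?case by simp
next
  case (Suc n)
  have "(\<Sum>i<Suc n. \<Sum>j<Suc n. g i j) = (\<Sum>i<Suc n. \<Sum>j<n. g i j) + (\<Sum>i<Suc n. g i n)"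
    by (simp add: sum.distrib)
  also have "(\<Sum>i<Suc n. \<Sum>j<n. g i j) = (\<Sum>i<n. \<Sum>j<n. g i j) + (\<Sum>j<n. g j n)"
    using sym by simp
  also have "(\<Sum>i<Suc n. g i n) = (\<Sum>i<n. g i n)" using diag by simp
  finally show ?case using Suc.IH by simp
qed

lemma sum_upper_triangle_add_weights:
  fixes R :: "nat \<Rightarrow> nat \<Rightarrow> real"
  assumes sym: "\<And>i j. R i j = R j i" and diag: "\<And>i. R i i = 0"
  shows "(\<Sum>j<n. \<Sum>i<j. (w i + w j) * R i j) = (\<Sum>i<n. \<Sum>j<n. w i * R i j)"
proof -
  have "(\<Sum>i<n. \<Sum>j<n. w j * R i j) = (\<Sum>j<n. \<Sum>i<n. w j * R j i)"
    by (subst sum.swap) (simp add: sym)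
  then have "(\<Sum>i<n. \<Sum>j<n. (w i + w j) * R i j) = 2 * (\<Sum>i<n. \<Sum>j<n. w i * R i j)"
    by (simp add: distrib_right sum.distrib)
  moreover have "2 * (\<Sum>j<n. \<Sum>i<j. (w i + w j) * R i j) = (\<Sum>i<n. \<Sum>j<n. (w i + w j) * R i j)"
    by (rule sum_upper_triangle_symmetric) (simp_all add: sym diag add.commute)
  ultimately show ?thesis by simp
qed

lemma sum_weighted_square_diff:
  fixes D A :: "nat \<Rightarrow> real"
  shows "(\<Sum>i<n. \<Sum>j<n. D i * (A i - A j)\<^sup>2) =
     real n * (\<Sum>i<n. D i * (A i)\<^sup>2) - 2 * (\<Sum>i<n. D i * A i) * (\<Sum>j<n. A j) + (\<Sum>i<n. D i) * (\<Sum>j<n. (A j)\<^sup>2)"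
proof -
  have "(\<Sum>i<n. \<Sum>j<n. D i * (A i - A j)\<^sup>2) =
      (\<Sum>i<n. \<Sum>j<n. D i * (A i)\<^sup>2 - 2 * (D i * A i) * A j + D i * (A j)\<^sup>2)"
    by (intro sum.cong refl) (simp add: power2_diff algebra_simps)
  also have "\<dots> = (\<Sum>i<n. real n * (D i * (A i)\<^sup>2) - 2 * (D i * A i) * (\<Sum>j<n. A j) + D i * (\<Sum>j<n. (A j)\<^sup>2))"
    by (intro sum.cong refl) (simp add: sum.distrib sum_subtractf sum_distrib_left)
  also have "\<dots> = real n * (\<Sum>i<n. D i * (A i)\<^sup>2) - 2 * (\<Sum>i<n. D i * A i) * (\<Sum>j<n. A j) + (\<Sum>i<n. D i) * (\<Sum>j<n. (A j)\<^sup>2)"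
    by (simp only: sum.distrib sum_subtractf flip: sum_distrib_left sum_distrib_right)
  finally show ?thesis .
qed

context graph_eigenbasis
begin

definition walk_eigvec :: "nat \<Rightarrow> nat \<Rightarrow> real" where "walk_eigvec k v = u k v / sqrt (d v)"

definition nonunit :: "nat set" where "nonunit = {k. k < N \<and> lam k \<noteq> 1}"

definition spectral_resistance :: "nat \<Rightarrow> nat \<Rightarrow> real" where
  "spectral_resistance i j = (\<Sum>k\<in>nonunit. (walk_eigvec k i - walk_eigvec k j)\<^sup>2 / (1 - lam k))"

definition inv_deg_weight :: "nat \<Rightarrow> real" where "inv_deg_weight k = (\<Sum>j<N. (u k j)\<^sup>2 / d j)"

lemma finite_nonunit: "finite nonunit"
  unfolding nonunit_def by simp

lemma laplacian_apply_walk_eigvec: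
  assumes "k < N" "v < N"
  shows "laplacian_apply N E (walk_eigvec k) v = sqrt (d v) * ((1 - lam k) * u k v)"
  using laplacian_apply_norm_adj[OF assms(2), of "u k"] eigvec[OF assms]
  unfolding walk_eigvec_def by (simp add: algebra_simps)

lemma sum_nonunit_extend:
  assumes i: "i < N" and j: "j < N"
  shows "(\<Sum>k\<in>nonunit. (walk_eigvec k i - walk_eigvec k j) * f k) = (\<Sum>k<N. (walk_eigvec k i - walk_eigvec k j) * f k)"
proof (rule sum.mono_neutral_left)
  show "\<forall>k\<in>{..<N} - nonunit. (walk_eigvec k i - walk_eigvec k j) * f k = 0"
    using walk_eigvec_1_const[OF _ _ i j] by (auto simp: nonunit_def walk_eigvec_def)
qed (auto simp: nonunit_def)

text \<open>The potential with L x = e_i - e_j is x = sum over k with lam k \<noteq> 1 of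
  (walk_eigvec k i - walk_eigvec k j) / (1 - lam k) * walk_eigvec k; any two such potentials
  differ by a constant since the graph is connected.\<close>

lemma eff_resistance_eq_spectral:
  assumes i: "i < N" and j: "j < N"
  shows "eff_resistance N E i j = spectral_resistance i j"
proof -
  define c where "c k = (walk_eigvec k i - walk_eigvec k j) / (1 - lam k)" for k
  define x where "x v = (\<Sum>k\<in>nonunit. c k * walk_eigvec k v)" for v
  have Lx: "laplacian_apply N E x v = (if v = i then 1 else 0) - (if v = j then 1 else 0)" if v: "v < N" for v
  proof -
    have "laplacian_apply N E x v = (\<Sum>k\<in>nonunit. c k * laplacian_apply N E (walk_eigvec k) v)"
      unfolding x_def by (rule laplacian_apply_sum[OF finite_nonunit])
    also have "\<dots> = sqrt (d v) * (\<Sum>k\<in>nonunit. (walk_eigvec k i - walk_eigvec k j) * u k v)"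
      unfolding sum_distrib_left using v
      by (intro sum.cong refl) (auto simp: c_def nonunit_def laplacian_apply_walk_eigvec)
    also have "(\<Sum>k\<in>nonunit. (walk_eigvec k i - walk_eigvec k j) * u k v)
             = (\<Sum>k<N. (walk_eigvec k i - walk_eigvec k j) * u k v)"
      by (rule sum_nonunit_extend[OF i j])
    also have "\<dots> = (\<Sum>k<N. u k i * u k v) / sqrt (d i) - (\<Sum>k<N. u k j * u k v) / sqrt (d j)"
      unfolding walk_eigvec_def by (simp add: sum_subtractf sum_divide_distrib algebra_simps)
    finally show ?thesis using eigvec_columns i j v degree_pos[OF v] by auto
  qed
  have "x i - x j = (\<Sum>k\<in>nonunit. c k * (walk_eigvec k i - walk_eigvec k j))"
    unfolding x_def by (simp add: sum_subtractf[symmetric] algebra_simps)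
  also have "\<dots> = spectral_resistance i j" unfolding spectral_resistance_def c_def
    by (intro sum.cong refl) (simp add: power2_eq_square)
  finally have x_diff: "x i - x j = spectral_resistance i j" .
  have "eff_resistance N E i j = x i - x j"
    unfolding eff_resistance_def
  proof (rule the_equality)
    fix r assume "\<exists>y. (\<forall>v<N. laplacian_apply N E y v = (if v = i then 1 else 0) - (if v = j then 1 else 0))
                    \<and> r = y i - y j"
    then obtain y where y: "\<forall>v<N. laplacian_apply N E y v = (if v = i then 1 else 0) - (if v = j then 1 else 0)"
      and r: "r = y i - y j" by blast
    have "\<forall>v<N. laplacian_apply N E (\<lambda>v. y v - x v) v = 0"
      using y Lx by (simp add: laplacian_apply_diff)
    from laplacian_kernel_const[OF this i j] show "r = x i - x j" using r by simp
  qed (use Lx in blast)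
  with x_diff show ?thesis by simp
qed

lemma spectral_resistance_commute: "spectral_resistance i j = spectral_resistance j i"
  unfolding spectral_resistance_def by (intro sum.cong refl) (simp add: power2_commute)

lemma deg_weighted_walk_eigvec_spread:
  assumes "k \<in> nonunit"
  shows "(\<Sum>i<N. \<Sum>j<N. d i * (walk_eigvec k i - walk_eigvec k j)\<^sup>2) = real N + vol * inv_deg_weight k"
proof -
  from assms have k: "k < N" and lk: "lam k \<noteq> 1" unfolding nonunit_def by auto
  have "(\<Sum>i<N. d i * (walk_eigvec k i)\<^sup>2) = dot N (u k) (u k)"
    unfolding dot_def walk_eigvec_def
    by (intro sum.cong refl) (simp add: power_divide power2_eq_square abs_of_nonneg[OF degree_nonneg]
                                       less_imp_neq[OF degree_pos, symmetric])
  also have "\<dots> = 1" using dot_eigvec[OF k k] by simp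
  finally have s1: "(\<Sum>i<N. d i * (walk_eigvec k i)\<^sup>2) = 1" .
  have "(\<Sum>i<N. d i * walk_eigvec k i) = dot N (u k) sqrt_deg"
    unfolding walk_eigvec_def dot_def sqrt_deg_def
  proof (intro sum.cong refl)
    fix i assume "i \<in> {..<N}"
    then have "d i / sqrt (d i) = sqrt (d i)" using degree_nonneg by (simp add: real_div_sqrt)
    then show "d i * (u k i / sqrt (d i)) = u k i * sqrt (d i)" by (metis times_divide_eq_right mult.commute)
  qed
  also have "\<dots> = 0" using dot_eigvec_eigenvector[OF k, of sqrt_deg 1] norm_adj_sqrt_deg lk by simp
  finally have s2: "(\<Sum>i<N. d i * walk_eigvec k i) = 0" .
  have s3: "(\<Sum>j<N. (walk_eigvec k j)\<^sup>2) = inv_deg_weight k"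
    unfolding walk_eigvec_def inv_deg_weight_def
    by (intro sum.cong refl) (simp add: power2_eq_square degree_nonneg)
  show ?thesis unfolding sum_weighted_square_diff s1 s2 s3 vol_def by simp
qed

lemma add_deg_kirchhoff_spectral:
  "add_deg_kirchhoff N E = (\<Sum>k\<in>nonunit. (real N + vol * inv_deg_weight k) / (1 - lam k))"
proof -
  have "add_deg_kirchhoff N E = (\<Sum>j<N. \<Sum>i<j. (d i + d j) * spectral_resistance i j)"
    unfolding add_deg_kirchhoff_def d_def
    by (intro sum.cong refl) (simp add: eff_resistance_eq_spectral)
  also have "\<dots> = (\<Sum>i<N. \<Sum>j<N. d i * spectral_resistance i j)"
    by (rule sum_upper_triangle_add_weights) (simp_all add: spectral_resistance_commute spectral_resistance_def)
  also have "\<dots> = (\<Sum>k\<in>nonunit. (\<Sum>i<N. \<Sum>j<N. d i * (walk_eigvec k i - walk_eigvec k j)\<^sup>2) / (1 - lam k))"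
    unfolding spectral_resistance_def sum_distrib_left sum_divide_distrib
    by (subst sum.swap, rule sum.cong[OF refl], subst sum.swap) (simp add: mult.assoc)
  also have "\<dots> = (\<Sum>k\<in>nonunit. (real N + vol * inv_deg_weight k) / (1 - lam k))"
    by (intro sum.cong refl) (simp add: deg_weighted_walk_eigvec_spread)
  finally show ?thesis .
qed

end

lemma proots_prod_list_linear: "proots (\<Prod>a\<leftarrow>as. [:- a, 1:]) = mset (as :: real list)"
proof (induction as)
  case (Cons a as)
  have "(\<Prod>a\<leftarrow>as. [:- a, 1:]) \<noteq> (0 :: real poly)" by (auto simp: prod_list_zero_iff)
  then have "proots ([:- a, 1:] * (\<Prod>a\<leftarrow>as. [:- a, 1:])) = proots [:- a, 1:] + proots (\<Prod>a\<leftarrow>as. [:- a, 1:])"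
    by (intro proots_mult) auto
  then show ?case using Cons by simp
qed simp

lemma sorted_last_eq_Max:
  fixes xs :: "'a :: linorder list"
  assumes "sorted xs" "xs \<noteq> []"
  shows "last xs = Max (set xs)"
  using assms by (induction xs rule: rev_induct) (auto simp: sorted_append intro!: Max_eqI[symmetric])

lemma rev_sorted_list_add_mset_nth_1:
  fixes x :: "'a :: linorder"
  assumes "\<forall>y\<in>#L. y < x" "L \<noteq> {#}"
  shows "rev (sorted_list_of_multiset (add_mset x L)) ! 1 = Max (set_mset L)"
proof -
  define ys where "ys = sorted_list_of_multiset L"
  have "sorted_list_of_multiset (add_mset x L) = ys @ [x]"
    unfolding ys_def sorted_list_of_multiset_insert using assms(1)
    by (intro sorted_insort_is_snoc) (auto intro: less_imp_le)
  moreover have "ys \<noteq> []" by (metis assms(2) mset_sorted_list_of_multiset mset.simps(1) ys_def)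
  moreover have "sorted ys" "set ys = set_mset L" by (simp_all add: ys_def)
  ultimately show ?thesis by (simp add: rev_nth) (metis One_nat_def last_conv_nth sorted_last_eq_Max)
qed

context graph_eigenbasis
begin

definition eigvec_mat :: "real mat" where
  "eigvec_mat = Matrix.mat N N (\<lambda>(i,k). u k i / sqrt (d i))"

definition eigvec_mat_inv :: "real mat" where
  "eigvec_mat_inv = Matrix.mat N N (\<lambda>(k,j). u k j * sqrt (d j))"

definition eigval_mat :: "real mat" where
  "eigval_mat = Matrix.mat N N (\<lambda>(i,j). if i = j then lam i else 0)"

lemma eigvec_mat_dim [simp]:
  "dim_row eigvec_mat = N" "dim_col eigvec_mat = N" "dim_row eigvec_mat_inv = N"
  "dim_col eigvec_mat_inv = N" "dim_row eigval_mat = N" "dim_col eigval_mat = N"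
  by (simp_all add: eigvec_mat_def eigvec_mat_inv_def eigval_mat_def)

lemma eigvec_mat_carrier [simp]:
  "eigvec_mat \<in> carrier_mat N N" "eigvec_mat_inv \<in> carrier_mat N N" "eigval_mat \<in> carrier_mat N N"
  by (simp_all add: eigvec_mat_def eigvec_mat_inv_def eigval_mat_def)

lemma eigvec_mat_mult_inv: "eigvec_mat * eigvec_mat_inv = 1\<^sub>m N"
proof (rule eq_matI)
  fix i j assume "i < dim_row (1\<^sub>m N)" "j < dim_col (1\<^sub>m N)"
  then have i: "i < N" and j: "j < N" by auto
  have "(eigvec_mat * eigvec_mat_inv) $$ (i,j) = (\<Sum>k<N. u k i / sqrt (d i) * (u k j * sqrt (d j)))"
    using i j by (subst index_mult_mat_sum) (auto simp: eigvec_mat_def eigvec_mat_inv_def)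
  also have "\<dots> = (sqrt (d j) / sqrt (d i)) * (\<Sum>k<N. u k i * u k j)"
    unfolding sum_distrib_left by (intro sum.cong refl) (simp add: field_simps)
  finally show "(eigvec_mat * eigvec_mat_inv) $$ (i,j) = 1\<^sub>m N $$ (i,j)"
    using eigvec_columns[OF i j] i j degree_pos[OF i] degree_pos[OF j] by simp
qed auto

lemma eigvec_mat_inv_mult: "eigvec_mat_inv * eigvec_mat = 1\<^sub>m N"
proof (rule eq_matI)
  fix i j assume "i < dim_row (1\<^sub>m N)" "j < dim_col (1\<^sub>m N)"
  then have i: "i < N" and j: "j < N" by auto
  have "(eigvec_mat_inv * eigvec_mat) $$ (i,j) = (\<Sum>k<N. u i k * sqrt (d k) * (u j k / sqrt (d k)))"
    using i j by (subst index_mult_mat_sum) (auto simp: eigvec_mat_def eigvec_mat_inv_def)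
  also have "\<dots> = dot N (u i) (u j)"
    unfolding dot_def by (intro sum.cong refl) (simp add: less_imp_neq[OF degree_pos, symmetric])
  finally show "(eigvec_mat_inv * eigvec_mat) $$ (i,j) = 1\<^sub>m N $$ (i,j)"
    using dot_eigvec[OF i j] i j by simp
qed auto

lemma trans_mat_diagonalized: "trans_mat N E = eigvec_mat * eigval_mat * eigvec_mat_inv"
proof (rule eq_matI)
  fix i j assume "i < dim_row (eigvec_mat * eigval_mat * eigvec_mat_inv)"
    "j < dim_col (eigvec_mat * eigval_mat * eigvec_mat_inv)"
  then have i: "i < N" and j: "j < N" by auto
  have XL: "(eigvec_mat * eigval_mat) $$ (i,k) = u k i / sqrt (d i) * lam k" if k: "k < N" for k
  proof -
    have "(eigvec_mat * eigval_mat) $$ (i,k) = (\<Sum>l<N. u l i / sqrt (d i) * (if l = k then lam l else 0))"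
      using i k by (subst index_mult_mat_sum) (auto simp: eigvec_mat_def eigval_mat_def)
    also have "\<dots> = (\<Sum>l<N. if l = k then u l i / sqrt (d i) * lam l else 0)"
      by (intro sum.cong) auto
    finally show ?thesis using k by simp
  qed
  have "(eigvec_mat * eigval_mat * eigvec_mat_inv) $$ (i,j)
      = (\<Sum>k<N. (eigvec_mat * eigval_mat) $$ (i,k) * eigvec_mat_inv $$ (k,j))"
    using i j by (intro index_mult_mat_sum) auto
  also have "\<dots> = (\<Sum>k<N. u k i / sqrt (d i) * lam k * (u k j * sqrt (d j)))"
    using j by (intro sum.cong refl) (simp add: XL eigvec_mat_inv_def)
  also have "\<dots> = (sqrt (d j) / sqrt (d i)) * norm_adj i j"
    unfolding norm_adj_spectral_expansion[OF i j] sum_distrib_left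
    by (intro sum.cong refl) (simp add: field_simps)
  also have "\<dots> = trans_mat N E $$ (i,j)"
    using i j degree_pos[OF i] degree_pos[OF j]
    by (auto simp: norm_adj_def trans_mat_def d_def real_sqrt_mult field_simps)
  finally show "trans_mat N E $$ (i,j) = (eigvec_mat * eigval_mat * eigvec_mat_inv) $$ (i,j)" ..
qed (auto simp: trans_mat_def)

lemma proots_char_poly_trans_mat:
  "proots (char_poly (trans_mat N E)) = image_mset lam (mset_set {..<N})"
proof -
  have "similar_mat (trans_mat N E) eigval_mat"
    unfolding similar_mat_def similar_mat_wit_def Let_def
    using eigvec_mat_mult_inv eigvec_mat_inv_mult trans_mat_diagonalized
    by (intro exI[of _ eigvec_mat] exI[of _ eigvec_mat_inv]) (auto simp: trans_mat_def)
  then have "char_poly (trans_mat N E) = char_poly eigval_mat" by (rule char_poly_similar)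
  also have "\<dots> = (\<Prod>a\<leftarrow>diag_mat eigval_mat. [:- a, 1:])"
    by (rule char_poly_upper_triangular) (auto simp: upper_triangular_def eigval_mat_def)
  also have "diag_mat eigval_mat = map lam [0..<N]" unfolding diag_mat_def eigval_mat_def by auto
  finally have "proots (char_poly (trans_mat N E)) = mset (map lam [0..<N])"
    by (simp only: proots_prod_list_linear)
  then show ?thesis by (simp add: mset_set_upto_eq_mset_upto)
qed

lemma lambda2_eq_Max:
  assumes k1: "k1 < N" "lam k1 = 1"
  shows "lambda2 N E = Max (lam ` ({..<N} - {k1}))"
proof -
  define L where "L = image_mset lam (mset_set ({..<N} - {k1}))"
  have "proots (char_poly (trans_mat N E)) = add_mset 1 L"
    unfolding proots_char_poly_trans_mat L_def using k1 by (subst mset_set.remove[of _ k1]) auto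
  then have "lambda2 N E = rev (sorted_list_of_multiset (add_mset 1 L)) ! 1"
    by (simp add: lambda2_def trans_eigenvalues_def)
  also have "\<dots> = Max (set_mset L)"
  proof (rule rev_sorted_list_add_mset_nth_1)
    show "\<forall>y\<in>#L. y < 1"
      using eigenvalue_1_unique[OF k1] eigval_le_1 by (force simp: L_def order.strict_iff_order)
    have "(if k1 = 0 then 1 else 0) \<in> {..<N} - {k1}" using two_le_N by auto
    then show "L \<noteq> {#}" unfolding L_def by (auto simp: mset_set_empty_iff)
  qed
  finally show ?thesis by (simp add: L_def)
qed

end

locale bipartite_graph_eigenbasis = graph_eigenbasis +
  assumes bipartite: "bipartite_graph N E"
begin

definition side :: "nat set" where
  "side = (SOME S. S \<subseteq> {0..<N} \<and> (\<forall>u v. E u v \<longrightarrow> (u \<in> S \<longleftrightarrow> v \<notin> S)))"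

definition sign :: "nat \<Rightarrow> real" where "sign v = (if v \<in> side then 1 else -1)"

lemma side_edge: "E v w \<Longrightarrow> v \<in> side \<longleftrightarrow> w \<notin> side"
  using someI_ex[OF bipartite[unfolded bipartite_graph_def]] unfolding side_def by blast

lemma dot_sign_flip: "dot N (\<lambda>w. sign w * f w) (\<lambda>w. sign w * g w) = dot N f g"
  unfolding dot_def by (intro sum.cong refl) (simp add: sign_def)

lemma norm_adj_sign_flip: "matvec N norm_adj (\<lambda>w. sign w * f w) v = - sign v * matvec N norm_adj f v"
  unfolding matvec_def sum_distrib_left
  by (intro sum.cong refl) (auto simp: norm_adj_def sign_def dest: side_edge)

lemma eigenvalue_ge_minus_1:
  assumes f1: "dot N f f = 1" and ev: "\<forall>v<N. matvec N norm_adj f v = c * f v"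
  shows "c \<ge> -1"
proof -
  have "dot N (\<lambda>w. sign w * f w) (\<lambda>w. sign w * f w) = 1"
    using f1 by (simp add: dot_sign_flip)
  moreover have "\<forall>v<N. matvec N norm_adj (\<lambda>w. sign w * f w) v = (- c) * (sign v * f v)"
    unfolding norm_adj_sign_flip using ev by simp
  ultimately have "- c \<le> 1" by (rule eigenvalue_le_1)
  then show ?thesis by simp
qed

lemma eigval_ge_minus_1: "k < N \<Longrightarrow> -1 \<le> lam k"
  using eigenvalue_ge_minus_1[of "u k" "lam k"] dot_eigvec eigvec by simp

lemma exists_eigenvalue_minus_1: "\<exists>k<N. lam k = -1"
proof (rule exists_eigval_of_eigenvector)
  show "\<forall>v<N. matvec N norm_adj (\<lambda>w. sign w * sqrt_deg w) v = - 1 * (sign v * sqrt_deg v)"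
    by (simp add: norm_adj_sign_flip norm_adj_sqrt_deg)
  show "sign 0 * sqrt_deg 0 \<noteq> 0" "0 < N"
    using two_le_N degree_pos[of 0] by (auto simp: sign_def sqrt_deg_def)
qed

lemma eigvec_minus_1_square:
  assumes k: "k < N" "lam k = -1" and v: "v < N"
  shows "(u k v)\<^sup>2 = d v / vol"
proof -
  have "(sign v * u k v)\<^sup>2 = d v / vol"
  proof (rule unit_eigenvector_1_square[OF _ _ v])
    show "dot N (\<lambda>w. sign w * u k w) (\<lambda>w. sign w * u k w) = 1"
      using dot_eigvec[OF k(1) k(1)] by (simp add: dot_sign_flip)
    show "\<forall>v<N. matvec N norm_adj (\<lambda>w. sign w * u k w) v = sign v * u k v"
      using eigvec k by (simp add: norm_adj_sign_flip)
  qed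
  then show ?thesis by (simp add: power_mult_distrib sign_def split: if_splits)
qed

end

lemma inverse_one_minus_spread:
  fixes p q lo hi :: real
  assumes "lo \<le> p" "p \<le> hi" "lo \<le> q" "q \<le> hi" "hi < 1" "p + q = lo + hi"
  shows "1 / (1 - p) + 1 / (1 - q) \<le> 1 / (1 - lo) + 1 / (1 - hi)"
proof -
  define A B P Q where "A = 1 - hi" and "B = 1 - lo" and "P = 1 - p" and "Q = 1 - q"
  have A: "A > 0" and AP: "A \<le> P" and PB: "P \<le> B" and AQ: "A \<le> Q" and PQ: "P + Q = A + B"
    using assms unfolding A_def B_def P_def Q_def by auto
  have pos: "P > 0" "Q > 0" "B > 0" using A AP AQ PB by auto
  have "P * Q - A * B = (P - A) * (B - P)" using PQ by (simp add: algebra_simps) (smt (verit) PQ mult.commute right_diff_distrib')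
  also have "\<dots> \<ge> 0" using AP PB by simp
  finally have "(A + B) / (P * Q) \<le> (A + B) / (A * B)"
    using A pos by (intro divide_left_mono) auto
  moreover have "1 / P + 1 / Q = (A + B) / (P * Q)" using pos PQ by (simp add: field_simps)
  moreover have "1 / A + 1 / B = (A + B) / (A * B)" using A pos by (simp add: field_simps)
  ultimately show ?thesis unfolding A_def B_def P_def Q_def by simp
qed

text \<open>On [-1, l] the function g y = 1/(1-y) lies below its chord, and phi = g - chord
  vanishes at both endpoints. Repeatedly pushing pairs of values apart collapses any family
  in [-1, l] to values at the endpoints plus one free value rho, with the same sum and a
  larger sum of phi.\<close>

locale inverse_gap_chord =
  fixes l :: real
  assumes nonneg: "0 \<le> l" and less_1: "l < 1"
begin

definition g :: "real \<Rightarrow> real" where "g y = 1 / (1 - y)"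
definition c :: real where "c = l + 1"
definition s :: real where "s = (g l - g (-1)) / c"
definition chord :: "real \<Rightarrow> real" where "chord y = g (-1) + (y + 1) * s"
definition phi :: "real \<Rightarrow> real" where "phi y = g y - chord y"

lemma c_pos: "c > 0" unfolding c_def using nonneg by simp

lemma phi_minus_1 [simp]: "phi (-1) = 0" unfolding phi_def chord_def by simp

lemma phi_l [simp]: "phi l = 0"
  unfolding phi_def chord_def s_def c_def using nonneg by (simp add: field_simps)

lemma phi_spread:
  assumes "lo \<le> p" "p \<le> hi" "lo \<le> q" "q \<le> hi" "hi < 1" "p + q = lo + hi"
  shows "phi p + phi q \<le> phi lo + phi hi"
proof -
  have "g p + g q \<le> g lo + g hi" unfolding g_def by (rule inverse_one_minus_spread[OF assms])
  moreover have "chord p + chord q = 2 * g (-1) + (p + q + 2) * s"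
    "chord lo + chord hi = 2 * g (-1) + (lo + hi + 2) * s"
    unfolding chord_def by (simp_all add: algebra_simps)
  ultimately show ?thesis unfolding phi_def using assms(6) by simp
qed

lemma sum_phi_collapse:
  assumes "finite I" and "\<forall>i\<in>I. -1 \<le> y i \<and> y i \<le> l"
  shows "\<exists>j::int. \<exists>\<rho>. -1 \<le> \<rho> \<and> \<rho> \<le> l \<and> (\<Sum>i\<in>I. y i + 1) = of_int j * c + (\<rho> + 1) \<and>
      (\<Sum>i\<in>I. phi (y i)) \<le> phi \<rho>"
  using assms
proof (induction I rule: finite_induct)
  case empty
  show ?case by (rule exI[of _ 0], rule exI[of _ "-1"]) (use nonneg in simp)
next
  case (insert x F)
  then obtain j \<rho> where r: "-1 \<le> \<rho>" "\<rho> \<le> l" and sm: "(\<Sum>i\<in>F. y i + 1) = of_int j * c + (\<rho> + 1)"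
    and ph: "(\<Sum>i\<in>F. phi (y i)) \<le> phi \<rho>" by auto
  have t: "-1 \<le> y x" "y x \<le> l" using insert.prems by auto
  have S: "(\<Sum>i\<in>insert x F. y i + 1) = (y x + 1) + (\<Sum>i\<in>F. y i + 1)"
    and P: "(\<Sum>i\<in>insert x F. phi (y i)) = phi (y x) + (\<Sum>i\<in>F. phi (y i))"
    using insert.hyps by simp_all
  show ?case
  proof (cases "(\<rho> + 1) + (y x + 1) \<le> c")
    case True
    define \<rho>' where "\<rho>' = \<rho> + y x + 1"
    have "phi \<rho> + phi (y x) \<le> phi (-1) + phi \<rho>'"
      using r t True less_1 unfolding \<rho>'_def c_def by (intro phi_spread) auto
    then have "(\<Sum>i\<in>insert x F. phi (y i)) \<le> phi \<rho>'" using P ph by simp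
    moreover have "(\<Sum>i\<in>insert x F. y i + 1) = of_int j * c + (\<rho>' + 1)" using S sm unfolding \<rho>'_def by simp
    moreover have "-1 \<le> \<rho>'" "\<rho>' \<le> l" using r t True unfolding \<rho>'_def c_def by auto
    ultimately show ?thesis by blast
  next
    case False
    define \<rho>' where "\<rho>' = \<rho> + y x - l"
    have "phi \<rho> + phi (y x) \<le> phi \<rho>' + phi l"
      using r t False less_1 unfolding \<rho>'_def c_def by (intro phi_spread) auto
    then have "(\<Sum>i\<in>insert x F. phi (y i)) \<le> phi \<rho>'" using P ph by simp
    moreover have "(\<Sum>i\<in>insert x F. y i + 1) = of_int (j + 1) * c + (\<rho>' + 1)"
      using S sm unfolding \<rho>'_def c_def by (simp add: algebra_simps)
    moreover have "-1 \<le> \<rho>'" "\<rho>' \<le> l" using r t False unfolding \<rho>'_def c_def by auto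
    ultimately show ?thesis by blast
  qed
qed

lemma phi_le_of_congruent:
  assumes "-1 \<le> \<rho>" "\<rho> \<le> l" "-1 \<le> x" "x \<le> l" and "x - \<rho> = of_int m * c"
  shows "phi \<rho> \<le> phi x"
proof -
  consider "m = 0" | "m \<ge> 1" | "m \<le> -1" by linarith
  then show ?thesis
  proof cases
    case 1
    then show ?thesis using assms(5) by simp
  next
    case 2
    then have "1 * c \<le> of_int m * c" using c_pos by (intro mult_right_mono) auto
    then have "x = l" "\<rho> = -1" using assms unfolding c_def by auto
    then show ?thesis by simp
  next
    case 3
    then have "1 * c \<le> of_int (-m) * c" using c_pos by (intro mult_right_mono) auto
    then have "\<rho> = l" "x = -1" using assms unfolding c_def by auto
    then show ?thesis by simp
  qed
qed

text \<open>The extremal configuration has n - k values at l, k - 1 values at -1 and one value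
  x = k - 1 - (n - k) l.\<close>

lemma floor_extremal_point:
  assumes "k = \<lfloor>(l * (n + 1) + 1) / (l + 1)\<rfloor>"
  shows "-1 \<le> of_int k - 1 - (n - of_int k) * l" "of_int k - 1 - (n - of_int k) * l \<le> l"
proof -
  have lp: "l + 1 > 0" using nonneg by simp
  have "of_int k * (l + 1) \<le> l * (n + 1) + 1" "l * (n + 1) + 1 < (of_int k + 1) * (l + 1)"
    using floor_divide_lower[OF lp] floor_divide_upper[OF lp] unfolding assms by auto
  then show "-1 \<le> of_int k - 1 - (n - of_int k) * l" "of_int k - 1 - (n - of_int k) * l \<le> l"
    by (simp_all add: algebra_simps)
qed

lemma sum_inverse_gap_le:
  assumes fin: "finite I" and rng: "\<forall>i\<in>I. -1 \<le> y i \<and> y i \<le> l" and sum0: "(\<Sum>i\<in>I. y i) = 0"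
    and kdef: "k = \<lfloor>(l * (real (card I) + 1) + 1) / (l + 1)\<rfloor>"
  shows "(\<Sum>i\<in>I. 1 / (1 - y i)) \<le> (real (card I) - of_int k) / (1 - l) + (of_int k - 1) / 2
           + 1 / (l * (real (card I) - of_int k) - of_int k + 2)"
proof -
  define n where "n = real (card I)"
  define x where "x = of_int k - 1 - (n - of_int k) * l"
  have x_rng: "-1 \<le> x" "x \<le> l"
    using floor_extremal_point[of k n] unfolding kdef n_def x_def by simp_all
  have n_split: "n = (n - of_int k) * c + (x + 1)" unfolding x_def c_def by (simp add: algebra_simps)
  have sum_shift: "(\<Sum>i\<in>I. y i + 1) = n" using sum0 unfolding n_def by (simp add: sum.distrib)
  obtain j :: int and \<rho> where r: "-1 \<le> \<rho>" "\<rho> \<le> l" and sm: "(\<Sum>i\<in>I. y i + 1) = of_int j * c + (\<rho> + 1)"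
    and ph: "(\<Sum>i\<in>I. phi (y i)) \<le> phi \<rho>"
    using sum_phi_collapse[OF fin rng] by blast
  have "x - \<rho> = of_int (j - (int (card I) - k)) * c"
    using sm n_split sum_shift unfolding n_def by (simp add: algebra_simps)
  then have phx: "phi \<rho> \<le> phi x" by (rule phi_le_of_congruent[OF r x_rng])
  have "(\<Sum>i\<in>I. 1 / (1 - y i)) = (\<Sum>i\<in>I. chord (y i)) + (\<Sum>i\<in>I. phi (y i))"
    unfolding phi_def g_def by (simp add: sum.distrib[symmetric])
  also have "(\<Sum>i\<in>I. chord (y i)) = n * g (-1) + n * s"
    using sum_shift unfolding chord_def n_def by (simp add: sum.distrib flip: sum_distrib_right)
  also have "n * g (-1) + n * s + (\<Sum>i\<in>I. phi (y i)) \<le> n * g (-1) + n * s + phi x"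
    using ph phx by simp
  also have "n * g (-1) + n * s + phi x = (n - of_int k) * g l + (of_int k - 1) * g (-1) + g x"
  proof -
    have "(n - of_int k) * g l + (of_int k - 1) * g (-1) + g x
        = (n - of_int k) * chord l + (of_int k - 1) * chord (-1) + chord x + phi x"
      using phi_l phi_minus_1 unfolding phi_def by (simp add: algebra_simps)
    also have "(n - of_int k) * chord l + (of_int k - 1) * chord (-1) + chord x
             = n * g (-1) + ((n - of_int k) * c + (x + 1)) * s"
      unfolding chord_def c_def by (simp add: algebra_simps)
    finally show ?thesis using n_split by simp
  qed
  also have "\<dots> = (n - of_int k) / (1 - l) + (of_int k - 1) / 2 + 1 / (l * (n - of_int k) - of_int k + 2)"
    unfolding g_def x_def by (simp add: algebra_simps)
  finally show ?thesis unfolding n_def .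
qed

end

context graph_eigenbasis
begin

lemma lambda2_lt_1:
  assumes k1: "k1 < N" "lam k1 = 1"
  shows "lambda2 N E < 1"
proof -
  have "(if k1 = 0 then 1 else 0) \<in> {..<N} - {k1}" using two_le_N by auto
  then have "lambda2 N E \<in> lam ` ({..<N} - {k1})"
    unfolding lambda2_eq_Max[OF k1] by (intro Max_in) auto
  then obtain k where k: "k < N" "k \<noteq> k1" "lambda2 N E = lam k" by auto
  then have "lam k \<noteq> 1" using eigenvalue_1_unique[OF k1] by blast
  with eigval_le_1[OF k(1)] k(3) show ?thesis by simp
qed

lemma eigval_le_lambda2:
  assumes k1: "k1 < N" "lam k1 = 1" and "k < N" "k \<noteq> k1"
  shows "lam k \<le> lambda2 N E"
  unfolding lambda2_eq_Max[OF k1] using assms(3,4) by (intro Max_ge) auto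

end

lemma sum_remove_two:
  assumes "finite A" "a \<in> A" "b \<in> A" "a \<noteq> b"
  shows "sum f A = f a + f b + sum f (A - {a, b})"
proof -
  have "sum f A = f a + (f b + sum f (A - {a} - {b}))"
    using assms by (simp add: sum.remove[of A a] sum.remove[of "A - {a}" b])
  also have "A - {a} - {b} = A - {a, b}" by auto
  finally show ?thesis by (simp add: add.assoc)
qed

context bipartite_graph_eigenbasis
begin

lemma add_deg_kirchhoff_bipartite:
  assumes k1: "k1 < N" "lam k1 = 1" and kN: "kN < N" "lam kN = -1"
  shows "add_deg_kirchhoff N E =
           real N + (\<Sum>k\<in>{..<N} - {k1, kN}. (real N + vol * inv_deg_weight k) / (1 - lam k))"
proof -
  have "nonunit = insert kN ({..<N} - {k1, kN})"
  proof (rule Set.set_eqI)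
    fix k show "k \<in> nonunit \<longleftrightarrow> k \<in> insert kN ({..<N} - {k1, kN})"
      using eigenvalue_1_unique[OF k1, of k] k1 kN by (auto simp: nonunit_def)
  qed
  moreover have "inv_deg_weight kN = (\<Sum>j<N. 1 / vol)"
    unfolding inv_deg_weight_def using eigvec_minus_1_square[OF kN] degree_pos
    by (intro sum.cong refl) (simp add: less_imp_neq[OF degree_pos, symmetric])
  ultimately show ?thesis
    unfolding add_deg_kirchhoff_spectral using kN vol_pos by simp
qed

lemma sum_inv_deg_weight_inner:
  assumes k1: "k1 < N" "lam k1 = 1" and kN: "kN < N" "lam kN = -1"
  shows "(\<Sum>k\<in>{..<N} - {k1, kN}. inv_deg_weight k) = (\<Sum>j<N. 1 / d j) - 2 * real N / vol"
proof -
  have "(\<Sum>k\<in>{..<N} - {k1, kN}. (u k j)\<^sup>2) = 1 - 2 * (d j / vol)" if j: "j < N" for j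
  proof -
    have "1 = (\<Sum>k<N. (u k j)\<^sup>2)" using eigvec_columns[OF j j] by (simp add: power2_eq_square)
    also have "\<dots> = (u k1 j)\<^sup>2 + (u kN j)\<^sup>2 + (\<Sum>k\<in>{..<N} - {k1, kN}. (u k j)\<^sup>2)"
      using k1 kN by (intro sum_remove_two) auto
    finally show ?thesis using eigvec_1_square[OF k1 j] eigvec_minus_1_square[OF kN j] by simp
  qed
  note inner = this
  have "(\<Sum>k\<in>{..<N} - {k1, kN}. inv_deg_weight k) = (\<Sum>j<N. (\<Sum>k\<in>{..<N} - {k1, kN}. (u k j)\<^sup>2) / d j)"
    unfolding inv_deg_weight_def by (subst sum.swap) (simp add: sum_divide_distrib)
  also have "\<dots> = (\<Sum>j<N. 1 / d j - 2 / vol)"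
  proof (intro sum.cong refl)
    fix j assume "j \<in> {..<N}"
    then show "(\<Sum>k\<in>{..<N} - {k1, kN}. (u k j)\<^sup>2) / d j = 1 / d j - 2 / vol"
      using inner degree_pos[of j] vol_pos by (simp add: field_simps)
  qed
  finally show ?thesis by (simp add: sum_subtractf)
qed

lemma sum_eigenvalues_inner:
  assumes k1: "k1 < N" "lam k1 = 1" and kN: "kN < N" "lam kN = -1"
  shows "(\<Sum>k\<in>{..<N} - {k1, kN}. lam k) = 0"
proof -
  have "(\<Sum>k<N. lam k) = lam k1 + lam kN + (\<Sum>k\<in>{..<N} - {k1, kN}. lam k)"
    using k1 kN by (intro sum_remove_two) auto
  then show ?thesis using sum_eigenvalues_eq_0 k1 kN by simp
qed

lemma lambda2_nonneg:
  assumes k1: "k1 < N" "lam k1 = 1" and kN: "kN < N" "lam kN = -1" and "N \<noteq> 2"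
  shows "0 \<le> lambda2 N E"
proof (rule ccontr)
  assume neg: "\<not> 0 \<le> lambda2 N E"
  define K where "K = {..<N} - {k1, kN}"
  have "k1 \<noteq> kN" using k1 kN by auto
  then have "card K = N - 2" using k1 kN by (auto simp: K_def card_Diff_subset)
  then have "K \<noteq> {}" using \<open>N \<noteq> 2\<close> two_le_N by auto
  moreover have "\<forall>i\<in>K. 0 < - lam i"
    using eigval_le_lambda2[OF k1] neg by (force simp: K_def)
  ultimately have "(\<Sum>i\<in>K. - lam i) > 0" by (intro sum_pos) (simp_all add: K_def)
  then show False using sum_eigenvalues_inner[OF k1 kN] by (simp add: K_def sum_negf)
qed

lemma sum_inverse_gap_inner_le:
  assumes k1: "k1 < N" "lam k1 = 1" and kN: "kN < N" "lam kN = -1"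
  defines "l \<equiv> lambda2 N E"
  defines "k \<equiv> \<lfloor>(l * (real N - 1) + 1) / (l + 1)\<rfloor>"
  shows "(\<Sum>i\<in>{..<N} - {k1, kN}. 1 / (1 - lam i))
           \<le> (real N - of_int k - 2) / (1 - l) + (of_int k - 1) / 2 + 1 / (l * (real N - of_int k - 2) - of_int k + 2)"
proof -
  define K where "K = {..<N} - {k1, kN}"
  have "k1 \<noteq> kN" using k1 kN by auto
  then have card_K: "card K = N - 2" using k1 kN by (auto simp: K_def card_Diff_subset)
  have rng: "\<forall>i\<in>K. -1 \<le> lam i \<and> lam i \<le> l"
    using eigval_ge_minus_1 eigval_le_lambda2[OF k1] by (auto simp: K_def l_def)
  show ?thesis
  proof (cases "N = 2")
    case True
    then have "K = {}" using card_K by (simp add: K_def)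
    moreover have "l = -1"
    proof -
      have "{..<N} - {k1} = {kN}" using True k1 kN \<open>k1 \<noteq> kN\<close> by auto
      then show ?thesis using kN lambda2_eq_Max[OF k1] by (simp add: l_def)
    qed
    ultimately show ?thesis unfolding K_def[symmetric] using True by (simp add: k_def)
  next
    case False
    have sum0: "(\<Sum>i\<in>K. lam i) = 0" unfolding K_def by (rule sum_eigenvalues_inner[OF k1 kN])
    have "0 \<le> l" unfolding l_def by (rule lambda2_nonneg[OF k1 kN False])
    then interpret inverse_gap_chord l
      using lambda2_lt_1[OF k1] by unfold_locales (simp_all add: l_def)
    have card_K': "real (card K) = real N - 2" using card_K two_le_N by simp
    have "k = \<lfloor>(l * (real (card K) + 1) + 1) / (l + 1)\<rfloor>"
      unfolding k_def card_K' by (simp add: algebra_simps)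
    from sum_inverse_gap_le[OF _ rng sum0 this]
    have "(\<Sum>i\<in>K. 1 / (1 - lam i)) \<le> (real N - 2 - of_int k) / (1 - l) + (of_int k - 1) / 2
           + 1 / (l * (real N - 2 - of_int k) - of_int k + 2)"
      unfolding card_K' by (simp add: K_def)
    then show ?thesis unfolding K_def by (simp add: algebra_simps)
  qed
qed

end

context bipartite_graph_eigenbasis
begin

lemma add_deg_kirchhoff_le_inner_sum:
  assumes k1: "k1 < N" "lam k1 = 1" and kN: "kN < N" "lam kN = -1"
  defines "l \<equiv> lambda2 N E"
  shows "add_deg_kirchhoff N E \<le> real N + real N * (\<Sum>i\<in>{..<N} - {k1, kN}. 1 / (1 - lam i))
                                 + (vol * (\<Sum>j<N. 1 / d j) - 2 * real N) / (1 - l)"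
proof -
  define K where "K = {..<N} - {k1, kN}"
  have gap: "1 - l > 0" using lambda2_lt_1[OF k1] by (simp add: l_def)
  have "add_deg_kirchhoff N E = real N + (\<Sum>i\<in>K. (real N + vol * inv_deg_weight i) / (1 - lam i))"
    unfolding K_def by (rule add_deg_kirchhoff_bipartite[OF k1 kN])
  also have "\<dots> \<le> real N + (\<Sum>i\<in>K. real N * (1 / (1 - lam i)) + vol / (1 - l) * inv_deg_weight i)"
  proof (intro add_left_mono sum_mono)
    fix i assume "i \<in> K"
    then have "lam i \<le> l" using eigval_le_lambda2[OF k1] by (auto simp: K_def l_def)
    moreover have "inv_deg_weight i \<ge> 0"
      unfolding inv_deg_weight_def using degree_nonneg by (intro sum_nonneg) auto
    ultimately have "vol * inv_deg_weight i / (1 - lam i) \<le> vol * inv_deg_weight i / (1 - l)"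
      using gap vol_pos by (intro divide_left_mono) auto
    then show "(real N + vol * inv_deg_weight i) / (1 - lam i)
             \<le> real N * (1 / (1 - lam i)) + vol / (1 - l) * inv_deg_weight i"
      by (simp add: add_divide_distrib)
  qed
  also have "\<dots> = real N + real N * (\<Sum>i\<in>K. 1 / (1 - lam i)) + vol * (\<Sum>i\<in>K. inv_deg_weight i) / (1 - l)"
    by (simp add: sum.distrib sum_distrib_left sum_divide_distrib)
  also have "vol * (\<Sum>i\<in>K. inv_deg_weight i) = vol * (\<Sum>j<N. 1 / d j) - 2 * real N"
    using sum_inv_deg_weight_inner[OF k1 kN] vol_pos by (simp add: K_def right_diff_distrib)
  finally show ?thesis unfolding K_def .
qed

lemma add_deg_kirchhoff_le:
  defines "l \<equiv> lambda2 N E"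
  defines "k \<equiv> \<lfloor>(l * (real N - 1) + 1) / (l + 1)\<rfloor>"
  defines "\<theta> \<equiv> l * (real N - of_int k - 2) - of_int k + 2"
  shows "add_deg_kirchhoff N E \<le>
           real N * (1/2 + (real N - of_int k - 3) / (1 - l) + of_int k / 2 + 1 / \<theta>)
           + 1 / (1 - l) * (vol * (\<Sum>j<N. 1 / d j) - real N)"
proof -
  obtain k1 where k1: "k1 < N" "lam k1 = 1" using exists_eigenvalue_1 by blast
  obtain kN where kN: "kN < N" "lam kN = -1" using exists_eigenvalue_minus_1 by blast
  define V where "V = vol * (\<Sum>j<N. 1 / d j)"
  have "add_deg_kirchhoff N E \<le> real N + real N * (\<Sum>i\<in>{..<N} - {k1, kN}. 1 / (1 - lam i))
                                 + (V - 2 * real N) / (1 - l)"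
    unfolding V_def l_def by (rule add_deg_kirchhoff_le_inner_sum[OF k1 kN])
  also have "\<dots> \<le> real N + real N * ((real N - of_int k - 2) / (1 - l) + (of_int k - 1) / 2 + 1 / \<theta>)
                    + (V - 2 * real N) / (1 - l)"
    using sum_inverse_gap_inner_le[OF k1 kN]
    unfolding k_def l_def \<theta>_def by (intro add_right_mono add_left_mono mult_left_mono) auto
  also have "\<dots> = real N * (1/2 + (real N - of_int k - 3) / (1 - l) + of_int k / 2 + 1 / \<theta>)
                   + 1 / (1 - l) * (V - real N)"
  proof -
    define r where "r = 1 / (1 - l)"
    have div: "x / (1 - l) = x * r" for x by (simp add: r_def)
    show ?thesis by (simp only: div) (simp add: algebra_simps add_divide_distrib diff_divide_distrib)
  qed
  finally show ?thesis unfolding V_def .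
qed

end

theorem corollary6:
  fixes N :: nat and E :: "nat \<Rightarrow> nat \<Rightarrow> bool"
  assumes "simple_graph N E" and "connected_graph N E" and "bipartite_graph N E"
    and "N \<ge> 2"
  defines "l \<equiv> lambda2 N E"
  defines "k \<equiv> \<lfloor>(l * (real N - 1) + 1) / (l + 1)\<rfloor>"
  defines "\<theta> \<equiv> l * (real N - of_int k - 2) - of_int k + 2"
  shows "add_deg_kirchhoff N E \<le>
           real N * (1/2 + (real N - of_int k - 3) / (1 - l) + of_int k / 2 + 1 / \<theta>)
           + 1 / (1 - l) * (2 * real (num_edges N E) * (\<Sum>j<N. 1 / real (deg N E j)) - real N)"
proof -
  interpret G: connected_simple_graph N E using assms(1,2,4) by unfold_locales
  obtain u lam where "orthonormal_family N N u" "\<forall>a<N. \<forall>i<N. matvec N G.norm_adj (u a) i = lam a * u a i"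
    using symmetric_matrix_orthonormal_eigenvectors[OF G.symmetric_norm_adj] by blast
  then interpret B: bipartite_graph_eigenbasis N E u lam using assms(3) by unfold_locales
  have "B.vol = 2 * real (num_edges N E)"
    unfolding B.vol_def by (rule G.sum_degree_eq_twice_num_edges)
  then show ?thesis using B.add_deg_kirchhoff_le unfolding l_def k_def \<theta>_def G.d_def by simp
qed
end
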